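(* Suppose Assumptions 1 and 2 hold. Then $\lim_{n\to\infty}\|\Gamma D_n v\|_V=0$ for every $v\in V$ (with $n\in\mathbb N$ large). Moreover, defining for sufficiently large $n\in\mathbb N$ the operators $\Gamma_n\in\mathcal L(X,V)$ by $\Gamma_n x:=\Gamma\, nR(n,A)x$, one has $$\lim_{n\to\infty}\|\Gamma_n z-\Gamma z\|_V=0\qquad\text{for all } z\in D(\tilde A).$$
   Context: Standing setting. $X$ and $V$ are real Banach lattices with positive cones $X_+$, $V_+$; an operator is positive if it maps positive elements to positive elements. $\tilde A:D(\tilde A)\subset X\to X$ is a closed, densely defined linear operator; $D(\tilde A)$ carries the graph norm, and $G,\Gamma:D(\tilde A)\to V$ are bounded linear operators. Assumption 1: (i) $A:=\tilde A|_{\ker G}$, with $D(A)=\ker G$, generates a $C_0$-semigroup $T=(T(t))_{t\ge0}$ on $X$, and $T$ is positive; (ii) $G$ is surjective. Under Assumption 1, for $\lambda\in\rho(A)$ the Dirichlet operator $D_\lambda:=(G|_{\ker(\lambda I-\tilde A)})^{-1}:V\to X$ exists and is bounded. $\omega_0(T)$ denotes the growth bound of $T$; $R(\lambda,A)=(\lambda I-A)^{-1}$. Assumption 2 (for a given $p\in[1,\infty)$): (i) $D_\lambda$ is positive for all sufficiently large real $\lambda$; (ii) $\Gamma$ is positive (i.e. $\Gamma(D(\tilde A)\cap X_+)\subset V_+$) and for some $\alpha>0$ there is $\gamma_\alpha>0$ with $\int_0^\alpha\|\Gamma T(t)x\|_V^p\,\mathrm dt\le\gamma_\alpha^p\|x\|_X^p$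 for all $x\in D(A)\cap X_+$; (iii) there is $\lambda_0>\omega_0(T)$ with $\sup_{\lambda\ge\lambda_0}\|\lambda D_\lambda v\|_X<\infty$ for every $v\in V$; (iv) for all $v\in V$ and $u^*\in V'$, $\lim_{\mathbb R\ni\lambda\to+\infty}\langle\Gamma D_\lambda v,u^*\rangle_{V,V'}=0$. *)

theory Defs
  imports "HOL-Analysis.Analysis"
begin

class banach_lattice = banach + ordered_real_vector + lattice +
  assumes lattice_norm: "sup x (- x) \<le> sup y (- y) \<Longrightarrow> norm x \<le> norm y"

definition linear_on_sub :: "'a::real_vector set \<Rightarrow> ('a \<Rightarrow> 'b::real_vector) \<Rightarrow> bool" where
  "linear_on_sub S f \<longleftrightarrow> subspace S \<and>
     (\<forall>x\<in>S. \<forall>y\<in>S. f (x + y) = f x + f y) \<and> (\<forall>c. \<forall>x\<in>S. f (c *\<^sub>R x) = c *\<^sub>R f x)"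

definition closed_dense_operator :: "'a::real_normed_vector set \<Rightarrow> ('a \<Rightarrow> 'a) \<Rightarrow> bool" where
  "closed_dense_operator Dom Op \<longleftrightarrow> linear_on_sub Dom Op \<and>
     closed {(x, Op x) | x. x \<in> Dom} \<and> closure Dom = UNIV"

definition graph_bounded :: "'a::real_normed_vector set \<Rightarrow> ('a \<Rightarrow> 'a) \<Rightarrow> ('a \<Rightarrow> 'b::real_normed_vector) \<Rightarrow> bool" where
  "graph_bounded Dom Op F \<longleftrightarrow> linear_on_sub Dom F \<and>
     (\<exists>C. \<forall>x\<in>Dom. norm (F x) \<le> C * (norm x + norm (Op x)))"

definition C0_semigroup :: "(real \<Rightarrow> 'a::real_normed_vector \<Rightarrow> 'a) \<Rightarrow> bool" where
  "C0_semigroup T \<longleftrightarrow> (\<forall>t\<ge>0. bounded_linear (T t)) \<and> T 0 = id \<and>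
     (\<forall>s\<ge>0. \<forall>t\<ge>0. T (s + t) = T s \<circ> T t) \<and>
     (\<forall>x. ((\<lambda>t. T t x) \<longlongrightarrow> x) (at_right 0))"

definition generates :: "'a::real_normed_vector set \<Rightarrow> ('a \<Rightarrow> 'a) \<Rightarrow> (real \<Rightarrow> 'a \<Rightarrow> 'a) \<Rightarrow> bool" where
  "generates Dom Op T \<longleftrightarrow> C0_semigroup T \<and>
     Dom = {x. \<exists>y. ((\<lambda>h. (1 / h) *\<^sub>R (T h x - x)) \<longlongrightarrow> y) (at_right 0)} \<and>
     (\<forall>x\<in>Dom. ((\<lambda>h. (1 / h) *\<^sub>R (T h x - x)) \<longlongrightarrow> Op x) (at_right 0))"

definition growth_bound :: "(real \<Rightarrow> 'a::real_normed_vector \<Rightarrow> 'a) \<Rightarrow> ereal" where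
  "growth_bound T = Inf {ereal w | w. \<exists>M. \<forall>t\<ge>0. \<forall>x. norm (T t x) \<le> M * exp (w * t) * norm x}"

definition resolvent :: "'a::real_vector set \<Rightarrow> ('a \<Rightarrow> 'a) \<Rightarrow> real \<Rightarrow> 'a \<Rightarrow> 'a" where
  "resolvent Dom Op l y = (THE x. x \<in> Dom \<and> l *\<^sub>R x - Op x = y)"

definition dirichlet :: "'a::real_vector set \<Rightarrow> ('a \<Rightarrow> 'a) \<Rightarrow> ('a \<Rightarrow> 'b) \<Rightarrow> real \<Rightarrow> 'b \<Rightarrow> 'a" where
  "dirichlet Dom At G l v = (THE x. x \<in> Dom \<and> l *\<^sub>R x - At x = 0 \<and> G x = v)"

end

theory Submission
  imports Defs "HOL-Library.Lattice_Algebras"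
begin

text \<open>For \<open>v \<ge> 0\<close> and large \<open>l\<close>, the resolvent identity \<open>D\<^sub>l v - D\<^sub>l\<^sub>+\<^sub>1 v = R(l) D\<^sub>l\<^sub>+\<^sub>1 v\<close>
  together with positivity of \<open>R(l)\<close>, \<open>D\<^sub>l\<close> and \<open>\<Gamma>\<close> makes \<open>\<Gamma> D\<^sub>n v\<close> a decreasing sequence of
  positive elements of \<open>V\<close>. By A2iv it tends to \<open>0\<close> weakly, and in a Banach lattice such a sequence
  tends to \<open>0\<close> in norm: otherwise Hahn--Banach separates the convex hull of the sequence, which
  lies above the sequence, from a ball around \<open>0\<close>. Splitting \<open>v = v\<^sup>+ - v\<^sup>-\<close> gives the first claim.

  For the second claim, \<open>n R(n) z - z = R(n) (At z) - D\<^sub>n (G z)\<close>, so it suffices that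
  \<open>\<Gamma> R(n) y \<rightarrow> 0\<close> for all \<open>y\<close>. For \<open>y \<in> D(A)\<close> this follows from the graph norm bound of \<open>\<Gamma>\<close> and
  \<open>\<parallel>R(n)\<parallel> \<le> M / (n - \<omega>)\<close>. The admissibility estimate, applied on consecutive intervals of
  length \<open>\<alpha>\<close>, bounds \<open>\<Gamma> R(n)\<close> uniformly on positive elements of \<open>D(A)\<close>, hence on all of \<open>X\<close>
  by density and the lattice decomposition; density of \<open>D(A)\<close> then concludes. Since only
  generation is assumed, \<open>R(l)\<close> is constructed as the Laplace transform of \<open>T\<close>.\<close>

section \<open>Banach lattices\<close>

subclass (in banach_lattice) lattice_ab_group_add ..

context banach_lattice
begin

lemma sup_uminus_eq_self: "0 \<le> a \<Longrightarrow> sup a (- a) = a"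
  by (metis neg_le_0_iff_le order_trans sup.absorb1)

lemma norm_mono_nonneg: "0 \<le> a \<Longrightarrow> a \<le> b \<Longrightarrow> norm a \<le> norm b"
  by (metis order_trans lattice_norm sup_uminus_eq_self)

lemma norm_pprt_le: "norm (pprt x) \<le> norm x"
proof (rule lattice_norm)
  have "x + - x \<le> sup x (- x) + sup x (- x)" by (intro add_mono) auto
  then have "0 \<le> sup x (- x)" by simp
  then have "pprt x \<le> sup x (- x)" unfolding pprt_def by simp
  then show "sup (pprt x) (- pprt x) \<le> sup x (- x)" by (simp add: sup_uminus_eq_self)
qed

lemma norm_nprt_le: "norm (nprt x) \<le> norm x"
  using norm_pprt_le[of "- x"] by (simp add: pprt_neg)

end

lemma closed_nonneg_cone: "closed {x::'a::banach_lattice. 0 \<le> x}"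
  unfolding closed_sequential_limits
proof (intro allI impI, elim conjE)
  fix s and l :: 'a assume s: "\<forall>n. s n \<in> {x. 0 \<le> x}" and l: "s \<longlonglongrightarrow> l"
  have "norm (nprt l) \<le> norm (l - s n)" for n
  proof -
    have "nprt (l - s n) \<le> nprt l" using s by (intro nprt_mono) auto
    then have "norm (- nprt l) \<le> norm (- nprt (l - s n))" by (intro norm_mono_nonneg) auto
    also have "\<dots> \<le> norm (l - s n)" using norm_nprt_le by simp
    finally show ?thesis by simp
  qed
  moreover have "(\<lambda>n. norm (l - s n)) \<longlonglongrightarrow> 0"
    using tendsto_norm_zero[OF LIM_zero[OF l]] by (simp add: norm_minus_commute)
  ultimately have "norm (nprt l) \<le> 0"
    by (intro tendsto_le[OF _ _ tendsto_const]) (auto intro: always_eventually)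
  then show "l \<in> {x. 0 \<le> x}" by (simp add: zero_le_iff_zero_nprt)
qed

section \<open>Hahn--Banach for sublinear functionals\<close>

definition dominated_graph :: "('a::real_vector \<Rightarrow> real) \<Rightarrow> ('a \<times> real) set \<Rightarrow> bool" where
  "dominated_graph p F \<longleftrightarrow> (0, 0) \<in> F
     \<and> (\<forall>x a y b. (x, a) \<in> F \<longrightarrow> (y, b) \<in> F \<longrightarrow> (x + y, a + b) \<in> F)
     \<and> (\<forall>x a c. (x, a) \<in> F \<longrightarrow> (c *\<^sub>R x, c * a) \<in> F)
     \<and> (\<forall>x a b. (x, a) \<in> F \<longrightarrow> (x, b) \<in> F \<longrightarrow> a = b)
     \<and> (\<forall>x a. (x, a) \<in> F \<longrightarrow> a \<le> p x)"

context
  fixes p :: "'a::real_vector \<Rightarrow> real" and F :: "('a \<times> real) set"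
  assumes F: "dominated_graph p F"
begin

lemma dominated_graph_zero: "(0, 0) \<in> F"
  and dominated_graph_add: "(x, a) \<in> F \<Longrightarrow> (y, b) \<in> F \<Longrightarrow> (x + y, a + b) \<in> F"
  and dominated_graph_scale: "(x, a) \<in> F \<Longrightarrow> (r *\<^sub>R x, r * a) \<in> F"
  and dominated_graph_functional: "(x, a) \<in> F \<Longrightarrow> (x, b) \<in> F \<Longrightarrow> a = b"
  and dominated_graph_le: "(x, a) \<in> F \<Longrightarrow> a \<le> p x"
  using F unfolding dominated_graph_def by blast+

end

lemma dominated_graph_Union_chain:
  assumes C: "C \<in> chains {F. dominated_graph p F}" "C \<noteq> {}"
  shows "dominated_graph p (\<Union>C)"
proof -
  have mem: "dominated_graph p F" if "F \<in> C" for F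
    using chainsD2[OF C(1)] that by blast
  have common: "\<exists>F\<in>C. F1 \<subseteq> F \<and> F2 \<subseteq> F" if "F1 \<in> C" "F2 \<in> C" for F1 F2
    using chainsD[OF C(1) that] that by blast
  show ?thesis
    unfolding dominated_graph_def
  proof (intro conjI allI impI)
    obtain F where "F \<in> C" using C(2) by blast
    then show "(0, 0) \<in> \<Union>C" using dominated_graph_zero[OF mem] by blast
  next
    fix x a y b assume "(x, a) \<in> \<Union>C" "(y, b) \<in> \<Union>C"
    then obtain F where "F \<in> C" "(x, a) \<in> F" "(y, b) \<in> F" using common by blast
    then show "(x + y, a + b) \<in> \<Union>C" using dominated_graph_add[OF mem] by blast
  next
    fix x a r assume "(x, a) \<in> \<Union>C"
    then obtain F where "F \<in> C" "(x, a) \<in> F" by blast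
    then show "(r *\<^sub>R x, r * a) \<in> \<Union>C" using dominated_graph_scale[OF mem] by blast
  next
    fix x a b assume "(x, a) \<in> \<Union>C" "(x, b) \<in> \<Union>C"
    then obtain F where "F \<in> C" "(x, a) \<in> F" "(x, b) \<in> F" using common by blast
    then show "a = b" using dominated_graph_functional[OF mem] by blast
  next
    fix x a assume "(x, a) \<in> \<Union>C"
    then obtain F where "F \<in> C" "(x, a) \<in> F" by blast
    then show "a \<le> p x" using dominated_graph_le[OF mem] by blast
  qed
qed

text \<open>Adjoining \<open>x0\<close> with value \<open>c\<close>: the two bounds on \<open>c\<close> are exactly what keeps the
  extended functional below \<open>p\<close> on both sides of the hyperplane.\<close>

context
  fixes p :: "'a::real_vector \<Rightarrow> real" and F :: "('a \<times> real) set" and x0 :: 'a and c :: real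
  assumes pos_homog: "\<And>t x. 0 \<le> t \<Longrightarrow> p (t *\<^sub>R x) = t * p x"
    and F: "dominated_graph p F" and x0: "x0 \<notin> fst ` F"
    and c_lower: "\<And>x a. (x, a) \<in> F \<Longrightarrow> a - p (x - x0) \<le> c"
    and c_upper: "\<And>y b. (y, b) \<in> F \<Longrightarrow> c \<le> p (y + x0) - b"
begin

lemma adjoin_dominated:
  assumes xa: "(x, a) \<in> F"
  shows "a + t * c \<le> p (x + t *\<^sub>R x0)"
proof -
  have F_scale: "((1 / s) *\<^sub>R x, (1 / s) * a) \<in> F" for s
    using dominated_graph_scale[OF F xa] .
  consider "t = 0" | "t > 0" | "t < 0" by linarith
  then show ?thesis
  proof cases
    case 1
    then show ?thesis using dominated_graph_le[OF F xa] by simp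
  next
    case 2
    have "t * c \<le> t * (p ((1 / t) *\<^sub>R x + x0) - (1 / t) * a)"
      using c_upper[OF F_scale] 2 by (intro mult_left_mono) auto
    moreover have "t * p ((1 / t) *\<^sub>R x + x0) = p (x + t *\<^sub>R x0)"
      using pos_homog[of t "(1 / t) *\<^sub>R x + x0"] 2 by (simp add: algebra_simps)
    ultimately show ?thesis using 2 by (simp add: algebra_simps)
  next
    case 3
    define s where "s = - t"
    have s: "s > 0" using 3 by (simp add: s_def)
    have "s * ((1 / s) * a - p ((1 / s) *\<^sub>R x - x0)) \<le> s * c"
      using c_lower[OF F_scale] s by (intro mult_left_mono) auto
    moreover have "s * p ((1 / s) *\<^sub>R x - x0) = p (x + t *\<^sub>R x0)"
      using pos_homog[of s "(1 / s) *\<^sub>R x - x0"] s by (simp add: s_def algebra_simps)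
    ultimately show ?thesis using s by (simp add: s_def algebra_simps)
  qed
qed

lemma adjoin_functional:
  assumes xa1: "(x1, a1) \<in> F" and xa2: "(x2, a2) \<in> F"
    and eq: "x1 + t1 *\<^sub>R x0 = x2 + t2 *\<^sub>R x0"
  shows "a1 + t1 * c = a2 + t2 * c"
proof (cases "t1 = t2")
  case True
  then show ?thesis using eq dominated_graph_functional[OF F xa1] xa2 by simp
next
  case False
  have "(x1 - x2, a1 - a2) \<in> F"
    using dominated_graph_add[OF F xa1 dominated_graph_scale[OF F xa2, of "-1"]] by simp
  then have "((1 / (t2 - t1)) *\<^sub>R (x1 - x2), (1 / (t2 - t1)) * (a1 - a2)) \<in> F"
    by (rule dominated_graph_scale[OF F])
  moreover have "x1 - x2 = (t2 - t1) *\<^sub>R x0"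
    using eq by (simp add: algebra_simps)
  ultimately have "(x0, (1 / (t2 - t1)) * (a1 - a2)) \<in> F" using False by simp
  then show ?thesis using x0 by force
qed

lemma dominated_graph_adjoin:
  "dominated_graph p {(x + t *\<^sub>R x0, a + t * c) | x a t. (x, a) \<in> F}"
  (is "dominated_graph p ?F'")
  unfolding dominated_graph_def
proof (intro conjI allI impI)
  have "(0, 0) = (0 + 0 *\<^sub>R x0, 0 + 0 * c)" by simp
  then show "(0, 0) \<in> ?F'" using dominated_graph_zero[OF F] by blast
next
  fix x a y b assume "(x, a) \<in> ?F'" "(y, b) \<in> ?F'"
  then obtain x1 a1 t1 x2 a2 t2 where xa: "(x1, a1) \<in> F" "(x2, a2) \<in> F"
    and "x = x1 + t1 *\<^sub>R x0" "a = a1 + t1 * c" "y = x2 + t2 *\<^sub>R x0" "b = a2 + t2 * c" by blast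
  then have "(x + y, a + b) = ((x1 + x2) + (t1 + t2) *\<^sub>R x0, (a1 + a2) + (t1 + t2) * c)"
    by (simp add: algebra_simps)
  then show "(x + y, a + b) \<in> ?F'" using dominated_graph_add[OF F xa] by blast
next
  fix x a r assume "(x, a) \<in> ?F'"
  then obtain x1 a1 t where xa: "(x1, a1) \<in> F" and "x = x1 + t *\<^sub>R x0" "a = a1 + t * c" by blast
  then have "(r *\<^sub>R x, r * a) = (r *\<^sub>R x1 + (r * t) *\<^sub>R x0, r * a1 + (r * t) * c)"
    by (simp add: algebra_simps)
  then show "(r *\<^sub>R x, r * a) \<in> ?F'" using dominated_graph_scale[OF F xa] by blast
next
  fix x a b assume "(x, a) \<in> ?F'" "(x, b) \<in> ?F'"
  then show "a = b" using adjoin_functional by blast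
next
  fix x a assume "(x, a) \<in> ?F'"
  then show "a \<le> p x" using adjoin_dominated by blast
qed

end

lemma dominated_graph_extend:
  fixes p :: "'a::real_vector \<Rightarrow> real"
  assumes subadd: "\<And>x y. p (x + y) \<le> p x + p y"
    and pos_homog: "\<And>t x. 0 \<le> t \<Longrightarrow> p (t *\<^sub>R x) = t * p x"
    and F: "dominated_graph p F" and x0: "x0 \<notin> fst ` F"
  shows "\<exists>F'. dominated_graph p F' \<and> F \<subset> F'"
proof -
  note F0 = dominated_graph_zero[OF F]
  have gap: "a - p (x - x0) \<le> p (y + x0) - b" if "(x, a) \<in> F" "(y, b) \<in> F" for x a y b
  proof -
    have "a + b \<le> p ((x - x0) + (y + x0))"
      using dominated_graph_le[OF F dominated_graph_add[OF F that]] by simp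
    also have "\<dots> \<le> p (x - x0) + p (y + x0)" by (rule subadd)
    finally show ?thesis by simp
  qed
  define L where "L = (\<lambda>(x, a). a - p (x - x0)) ` F"
  define c where "c = Sup L"
  have "bdd_above L" unfolding L_def bdd_above_def using gap F0 by fastforce
  then have c_lower: "a - p (x - x0) \<le> c" if "(x, a) \<in> F" for x a
    unfolding c_def using that by (intro cSup_upper) (auto simp: L_def)
  have c_upper: "c \<le> p (y + x0) - b" if "(y, b) \<in> F" for y b
    unfolding c_def using F0 that gap by (intro cSup_least) (auto simp: L_def)
  define F' where "F' = {(x + t *\<^sub>R x0, a + t * c) | x a t. (x, a) \<in> F}"
  have "dominated_graph p F'"
    unfolding F'_def by (rule dominated_graph_adjoin[OF pos_homog F x0 c_lower c_upper])
  moreover have adjoined: "(x + t *\<^sub>R x0, a + t * c) \<in> F'" if "(x, a) \<in> F" for x a t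
    using that unfolding F'_def by blast
  then have "F \<subseteq> F'" using adjoined[of _ _ 0] by auto
  moreover have "(x0, c) \<in> F' - F" using adjoined[OF F0, of 1] x0 by force
  ultimately show ?thesis by blast
qed

lemma hahn_banach_sublinear:
  fixes p :: "'a::real_vector \<Rightarrow> real"
  assumes subadd: "\<And>x y. p (x + y) \<le> p x + p y"
    and pos_homog: "\<And>t x. 0 \<le> t \<Longrightarrow> p (t *\<^sub>R x) = t * p x"
  shows "\<exists>u. linear u \<and> (\<forall>x. u x \<le> p x)"
proof -
  have "dominated_graph p {(0, 0)}"
    using pos_homog[of 0 0] unfolding dominated_graph_def by auto
  then have "\<forall>C\<in>chains {F. dominated_graph p F}. \<exists>U\<in>{F. dominated_graph p F}. \<forall>X\<in>C. X \<subseteq> U"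
    using dominated_graph_Union_chain by (metis Union_upper empty_iff mem_Collect_eq)
  from Zorn_Lemma2[OF this] obtain F where F: "dominated_graph p F"
    and maximal: "\<And>X. dominated_graph p X \<Longrightarrow> F \<subseteq> X \<Longrightarrow> X = F" by blast
  have total: "\<exists>a. (x, a) \<in> F" for x
  proof (rule ccontr)
    assume "\<nexists>a. (x, a) \<in> F"
    then have "x \<notin> fst ` F" by force
    then show False using dominated_graph_extend[OF subadd pos_homog F] maximal by blast
  qed
  define u where "u x = (THE a. (x, a) \<in> F)" for x
  have uF: "(x, u x) \<in> F" for x
    unfolding u_def using total[of x] dominated_graph_functional[OF F] by (metis theI)
  have u_eq: "(x, a) \<in> F \<Longrightarrow> u x = a" for x a
    using uF dominated_graph_functional[OF F] by blast
  have "linear u"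
  proof (rule linearI)
    show "u (x + y) = u x + u y" for x y using u_eq[OF dominated_graph_add[OF F uF uF]] .
    show "u (r *\<^sub>R x) = r *\<^sub>R u x" for r x using u_eq[OF dominated_graph_scale[OF F uF]] by simp
  qed
  moreover have "u x \<le> p x" for x using dominated_graph_le[OF F uF] .
  ultimately show ?thesis by blast
qed

section \<open>Separation from a ball and a Dini-type theorem\<close>

text \<open>If all points of the convex set \<open>K\<close> have norm at least \<open>\<epsilon>\<close>, this is a sublinear
  functional below the norm that is at most \<open>-\<epsilon>\<close> on \<open>-K\<close>; a linear functional below it
  separates \<open>K\<close> from the open \<open>\<epsilon>\<close>-ball.\<close>

definition ball_gauge :: "'a::real_normed_vector set \<Rightarrow> real \<Rightarrow> 'a \<Rightarrow> real" where
  "ball_gauge K \<epsilon> z = Inf {norm (z + s *\<^sub>R y) - s * \<epsilon> | s y. 0 \<le> s \<and> y \<in> K}"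

context
  fixes K :: "'a::real_normed_vector set" and \<epsilon> :: real
  assumes K: "convex K" "K \<noteq> {}" and far: "\<And>y. y \<in> K \<Longrightarrow> \<epsilon> \<le> norm y"
begin

lemma ball_gauge_bdd_below: "bdd_below {norm (z + s *\<^sub>R y) - s * \<epsilon> | s y. 0 \<le> s \<and> y \<in> K}"
proof -
  have "- norm z \<le> norm (z + s *\<^sub>R y) - s * \<epsilon>" if "0 \<le> s" "y \<in> K" for s y
  proof -
    have "s * \<epsilon> \<le> norm (s *\<^sub>R y)" using far[OF that(2)] that(1) by (simp add: mult_left_mono)
    also have "\<dots> \<le> norm (z + s *\<^sub>R y) + norm z" using norm_triangle_ineq4[of "z + s *\<^sub>R y" z] by simp
    finally show ?thesis by simp
  qed
  then show ?thesis unfolding bdd_below_def by fastforce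
qed

lemma ball_gauge_le: "0 \<le> s \<Longrightarrow> y \<in> K \<Longrightarrow> ball_gauge K \<epsilon> z \<le> norm (z + s *\<^sub>R y) - s * \<epsilon>"
  unfolding ball_gauge_def by (rule cInf_lower[OF _ ball_gauge_bdd_below]) auto

lemma ball_gauge_greatest:
  assumes "\<And>s y. 0 \<le> s \<Longrightarrow> y \<in> K \<Longrightarrow> c \<le> norm (z + s *\<^sub>R y) - s * \<epsilon>"
  shows "c \<le> ball_gauge K \<epsilon> z"
proof -
  obtain y where "y \<in> K" using K(2) by blast
  then have "norm (z + 0 *\<^sub>R y) - 0 * \<epsilon> \<in> {norm (z + s *\<^sub>R y) - s * \<epsilon> | s y. 0 \<le> s \<and> y \<in> K}"
    by blast
  then show ?thesis unfolding ball_gauge_def using assms by (intro cInf_greatest) auto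
qed

lemma ball_gauge_le_norm: "ball_gauge K \<epsilon> z \<le> norm z"
  using ball_gauge_le[of 0] K(2) by fastforce

lemma ball_gauge_uminus: "y \<in> K \<Longrightarrow> ball_gauge K \<epsilon> (- y) \<le> - \<epsilon>"
  using ball_gauge_le[of 1 y "- y"] by simp

lemma ball_gauge_subadd: "ball_gauge K \<epsilon> (z1 + z2) \<le> ball_gauge K \<epsilon> z1 + ball_gauge K \<epsilon> z2"
proof -
  have combine: "ball_gauge K \<epsilon> (z1 + z2)
      \<le> (norm (z1 + s1 *\<^sub>R y1) - s1 * \<epsilon>) + (norm (z2 + s2 *\<^sub>R y2) - s2 * \<epsilon>)"
    if "0 \<le> s1" "y1 \<in> K" "0 \<le> s2" "y2 \<in> K" for s1 y1 s2 y2
  proof (cases "s1 + s2 = 0")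
    case True
    then have "s1 = 0" "s2 = 0" using that by auto
    then show ?thesis
      using ball_gauge_le[of 0 y1 "z1 + z2"] that(2) norm_triangle_ineq[of z1 z2] by simp
  next
    case False
    define s where "s = s1 + s2"
    have s: "s > 0" using False that by (simp add: s_def)
    define y where "y = (s1 / s) *\<^sub>R y1 + (s2 / s) *\<^sub>R y2"
    have "y \<in> K" unfolding y_def using K(1) that s
      by (intro convexD) (auto simp: s_def add_divide_distrib[symmetric])
    then have "ball_gauge K \<epsilon> (z1 + z2) \<le> norm (z1 + z2 + s *\<^sub>R y) - s * \<epsilon>"
      using ball_gauge_le s by simp
    also have "s *\<^sub>R y = s1 *\<^sub>R y1 + s2 *\<^sub>R y2"
      using s by (simp add: y_def scaleR_add_right)
    also have "z1 + z2 + (s1 *\<^sub>R y1 + s2 *\<^sub>R y2) = (z1 + s1 *\<^sub>R y1) + (z2 + s2 *\<^sub>R y2)"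
      by (simp add: algebra_simps)
    also have "norm \<dots> \<le> norm (z1 + s1 *\<^sub>R y1) + norm (z2 + s2 *\<^sub>R y2)"
      by (rule norm_triangle_ineq)
    finally show ?thesis by (simp add: s_def algebra_simps)
  qed
  have "ball_gauge K \<epsilon> (z1 + z2) - (norm (z2 + s2 *\<^sub>R y2) - s2 * \<epsilon>) \<le> ball_gauge K \<epsilon> z1"
    if "0 \<le> s2" "y2 \<in> K" for s2 y2
  proof (rule ball_gauge_greatest)
    fix s :: real and y assume "0 \<le> s" "y \<in> K"
    from combine[OF this that]
    show "ball_gauge K \<epsilon> (z1 + z2) - (norm (z2 + s2 *\<^sub>R y2) - s2 * \<epsilon>) \<le> norm (z1 + s *\<^sub>R y) - s * \<epsilon>"
      by simp
  qed
  then have "ball_gauge K \<epsilon> (z1 + z2) - ball_gauge K \<epsilon> z1 \<le> ball_gauge K \<epsilon> z2"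
    by (intro ball_gauge_greatest) (simp add: algebra_simps)
  then show ?thesis by simp
qed

lemma ball_gauge_scale_le:
  assumes t: "t > 0"
  shows "ball_gauge K \<epsilon> (t *\<^sub>R z) \<le> t * ball_gauge K \<epsilon> z"
proof -
  have "ball_gauge K \<epsilon> (t *\<^sub>R z) / t \<le> norm (z + s *\<^sub>R y) - s * \<epsilon>" if "0 \<le> s" "y \<in> K" for s y
  proof -
    have "ball_gauge K \<epsilon> (t *\<^sub>R z) \<le> norm (t *\<^sub>R z + (t * s) *\<^sub>R y) - (t * s) * \<epsilon>"
      by (rule ball_gauge_le) (use that t in auto)
    also have "t *\<^sub>R z + (t * s) *\<^sub>R y = t *\<^sub>R (z + s *\<^sub>R y)" by (simp add: scaleR_right_distrib)
    also have "norm (t *\<^sub>R (z + s *\<^sub>R y)) - (t * s) * \<epsilon> = t * (norm (z + s *\<^sub>R y) - s * \<epsilon>)"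
      using t by (simp add: abs_of_pos right_diff_distrib mult.assoc)
    finally show ?thesis using t by (simp add: field_simps)
  qed
  then have "ball_gauge K \<epsilon> (t *\<^sub>R z) / t \<le> ball_gauge K \<epsilon> z" by (rule ball_gauge_greatest)
  then show ?thesis using t by (simp add: field_simps)
qed

lemma ball_gauge_pos_homog: "0 \<le> t \<Longrightarrow> ball_gauge K \<epsilon> (t *\<^sub>R z) = t * ball_gauge K \<epsilon> z"
proof (cases "t = 0")
  case True
  obtain y where "y \<in> K" using K(2) by blast
  then have "ball_gauge K \<epsilon> 0 \<le> 0" using ball_gauge_le[of 0 y 0] by simp
  moreover have "0 \<le> ball_gauge K \<epsilon> 0"
    using far by (intro ball_gauge_greatest) (simp add: mult_left_mono)
  ultimately show ?thesis using True by simp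
next
  case False
  assume "0 \<le> t"
  then have t: "t > 0" using False by simp
  have "ball_gauge K \<epsilon> z \<le> (1 / t) * ball_gauge K \<epsilon> (t *\<^sub>R z)"
    using ball_gauge_scale_le[of "1 / t" "t *\<^sub>R z"] t by simp
  then show ?thesis using ball_gauge_scale_le[OF t, of z] t by (simp add: field_simps)
qed

lemma separation_from_ball: "\<exists>u. bounded_linear u \<and> (\<forall>y\<in>K. \<epsilon> \<le> u y)"
proof -
  obtain u where u: "linear u" "\<And>z. u z \<le> ball_gauge K \<epsilon> z"
    using hahn_banach_sublinear[OF ball_gauge_subadd ball_gauge_pos_homog] by blast
  have "\<bar>u z\<bar> \<le> norm z" for z
    using u(2)[of z] u(2)[of "- z"] ball_gauge_le_norm[of z] ball_gauge_le_norm[of "- z"]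
      linear_neg[OF u(1), of z] by simp
  then have "bounded_linear u"
    using u(1) by (intro bounded_linear_intro[of u 1]) (auto simp: linear_add linear_scale)
  moreover have "\<epsilon> \<le> u y" if "y \<in> K" for y
    using u(2)[of "- y"] ball_gauge_uminus[OF that] linear_neg[OF u(1), of y] by simp
  ultimately show ?thesis by blast
qed

end

lemma convex_hull_range_antimono_dominates:
  fixes x :: "nat \<Rightarrow> 'a::ordered_real_vector"
  assumes dec: "\<And>m n. m \<le> n \<Longrightarrow> x n \<le> x m" and y: "y \<in> convex hull (range x)"
  shows "\<exists>m. x m \<le> y"
proof -
  have "convex {y. \<exists>m. x m \<le> y}"
    unfolding convex_def
  proof (intro ballI allI impI)
    fix y1 y2 :: 'a and u v :: real
    assume "y1 \<in> {y. \<exists>m. x m \<le> y}" "y2 \<in> {y. \<exists>m. x m \<le> y}" and uv: "0 \<le> u" "0 \<le> v" "u + v = 1"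
    then obtain m1 m2 where "x m1 \<le> y1" "x m2 \<le> y2" by blast
    then have "x (max m1 m2) \<le> y1" "x (max m1 m2) \<le> y2"
      using dec[of m1 "max m1 m2"] dec[of m2 "max m1 m2"] by auto
    then have "u *\<^sub>R x (max m1 m2) + v *\<^sub>R x (max m1 m2) \<le> u *\<^sub>R y1 + v *\<^sub>R y2"
      using uv by (intro add_mono scaleR_left_mono)
    moreover have "u *\<^sub>R x (max m1 m2) + v *\<^sub>R x (max m1 m2) = x (max m1 m2)"
      using uv(3) by (simp flip: scaleR_add_left)
    ultimately show "u *\<^sub>R y1 + v *\<^sub>R y2 \<in> {y. \<exists>m. x m \<le> y}" by auto
  qed
  then have "convex hull (range x) \<subseteq> {y. \<exists>m. x m \<le> y}"
    by (intro hull_minimal) auto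
  then show ?thesis using y by blast
qed

lemma antimono_weakly_null_imp_norm_null:
  fixes x :: "nat \<Rightarrow> 'a::banach_lattice"
  assumes pos: "\<And>n. 0 \<le> x n" and dec: "\<And>n. x (Suc n) \<le> x n"
    and weak: "\<And>u::'a \<Rightarrow> real. bounded_linear u \<Longrightarrow> (\<lambda>n. u (x n)) \<longlonglongrightarrow> 0"
  shows "(\<lambda>n. norm (x n)) \<longlonglongrightarrow> 0"
proof -
  have dec_le: "m \<le> n \<Longrightarrow> x n \<le> x m" for m n
    using lift_Suc_antimono_le[of x, OF dec] by blast
  have "decseq (\<lambda>n. norm (x n))"
    by (intro decseq_SucI norm_mono_nonneg pos dec)
  moreover have "\<forall>n. 0 \<le> norm (x n)" by simp
  ultimately obtain L where L: "(\<lambda>n. norm (x n)) \<longlonglongrightarrow> L" "\<forall>n. L \<le> norm (x n)"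
    by (rule decseq_convergent)
  have far: "L \<le> norm y" if y: "y \<in> convex hull (range x)" for y
  proof -
    obtain m where "x m \<le> y" using convex_hull_range_antimono_dominates[OF dec_le y] by blast
    then show ?thesis using L(2) norm_mono_nonneg[OF pos] by (metis order_trans)
  qed
  have "convex hull (range x) \<noteq> {}" by simp
  then obtain u where u: "bounded_linear u" "\<forall>y\<in>convex hull (range x). L \<le> u y"
    using separation_from_ball[of "convex hull (range x)" L, OF convex_convex_hull _ far] by blast
  then have "L \<le> u (x n)" for n using hull_inc[of "x n" "range x"] by blast
  then have "L \<le> 0" using LIMSEQ_le_const[OF weak[OF u(1)]] by blast
  moreover have "0 \<le> L" using LIMSEQ_le_const[OF L(1)] by simp
  ultimately show ?thesis using L(1) by simp
qed

section \<open>Integrals of continuous functions\<close>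

lemma integral_cell_estimate:
  fixes f :: "real \<Rightarrow> 'a::banach"
  assumes h: "0 \<le> h" and f: "continuous_on {t0..t0 + h} f"
    and close: "\<And>t. t \<in> {t0..t0 + h} \<Longrightarrow> norm (f t - f t0) \<le> e"
  shows "norm (integral {t0..t0 + h} f - h *\<^sub>R f t0) \<le> e * h"
proof -
  have "integral {t0..t0 + h} f - h *\<^sub>R f t0 = integral {t0..t0 + h} (\<lambda>t. f t - f t0)"
    using integral_diff[OF integrable_continuous_real[OF f] integrable_const_ivl, of "f t0"] h by simp
  also have "norm \<dots> \<le> e * (t0 + h - t0)"
    using h close by (intro integral_bound continuous_intros f) auto
  finally show ?thesis by simp
qed

lemma integral_average_tendsto:
  fixes f :: "real \<Rightarrow> 'a::banach"
  assumes f: "continuous_on {a..a + 1} f"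
  shows "((\<lambda>s. (1 / s) *\<^sub>R integral {a..a + s} f) \<longlongrightarrow> f a) (at_right 0)"
proof (rule tendstoI)
  fix e :: real assume e: "e > 0"
  have "continuous (at a within {a..a + 1}) f" using f by (simp add: continuous_on_eq_continuous_within)
  then obtain d where d: "d > 0"
    and dd: "\<And>t. t \<in> {a..a + 1} \<Longrightarrow> dist t a < d \<Longrightarrow> dist (f t) (f a) < e / 2"
    unfolding continuous_within_eps_delta using e by (metis half_gt_zero)
  show "\<forall>\<^sub>F s in at_right 0. dist ((1 / s) *\<^sub>R integral {a..a + s} f) (f a) < e"
    unfolding eventually_at_right_field
  proof (intro exI[of _ "min d 1"] conjI allI impI)
    fix s :: real assume s: "s > 0" "s < min d 1"
    have "norm (integral {a..a + s} f - s *\<^sub>R f a) \<le> e / 2 * s"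
    proof (rule integral_cell_estimate)
      show "continuous_on {a..a + s} f" using s by (intro continuous_on_subset[OF f]) auto
      show "norm (f t - f a) \<le> e / 2" if "t \<in> {a..a + s}" for t
        using dd[of t] that s by (auto simp: dist_norm dist_real_def)
    qed (use s in auto)
    then have "(1 / s) * norm (integral {a..a + s} f - s *\<^sub>R f a) \<le> e / 2"
      using s by (simp add: field_simps)
    then have "norm ((1 / s) *\<^sub>R (integral {a..a + s} f - s *\<^sub>R f a)) \<le> e / 2"
      using s by simp
    moreover have "(1 / s) *\<^sub>R (integral {a..a + s} f - s *\<^sub>R f a) = (1 / s) *\<^sub>R integral {a..a + s} f - f a"
      using s by (simp add: algebra_simps)
    ultimately show "dist ((1 / s) *\<^sub>R integral {a..a + s} f) (f a) < e"
      using e by (simp add: dist_norm)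
  qed (use d in auto)
qed

definition riemann_sum :: "(real \<Rightarrow> 'a::real_vector) \<Rightarrow> real \<Rightarrow> real \<Rightarrow> nat \<Rightarrow> 'a" where
  "riemann_sum f a b n = (\<Sum>k<n. ((b - a) / real n) *\<^sub>R f (a + real k * ((b - a) / real n)))"

lemma riemann_point_in_interval:
  fixes a b :: real
  assumes "k < n" "a \<le> b"
  shows "a + real k * ((b - a) / real n) \<in> {a..b}"
proof -
  have "real k / real n * (b - a) \<le> b - a"
    using assms by (intro mult_left_le_one_le) auto
  then show ?thesis using assms by (simp add: times_divide_eq_right mult.commute)
qed

lemma integral_uniform_split:
  fixes f :: "real \<Rightarrow> 'a::banach"
  assumes h: "0 \<le> h" and f: "continuous_on {a..a + real n * h} f"
  shows "integral {a..a + real n * h} f = (\<Sum>k<n. integral {a + real k * h..a + real k * h + h} f)"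
  using f
proof (induction n)
  case (Suc n)
  have le: "a \<le> a + real n * h" "a + real n * h \<le> a + real n * h + h" using h by auto
  have "continuous_on {a..a + real n * h} f"
    by (rule continuous_on_subset[OF Suc.prems]) (use le in \<open>auto simp: algebra_simps\<close>)
  moreover have "integral {a..a + real n * h} f + integral {a + real n * h..a + real n * h + h} f
      = integral {a..a + real n * h + h} f"
    using Suc.prems by (intro Henstock_Kurzweil_Integration.integral_combine[OF le] integrable_continuous_real)
      (simp add: algebra_simps)
  ultimately show ?case using Suc.IH by (simp add: algebra_simps)
qed simp

lemma riemann_sum_error_le:
  fixes f :: "real \<Rightarrow> 'a::banach"
  assumes ab: "a \<le> b" and n: "n > 0" and f: "continuous_on {a..b} f"
    and close: "\<And>x x'. x \<in> {a..b} \<Longrightarrow> x' \<in> {a..b} \<Longrightarrow> dist x' x \<le> (b - a) / real n \<Longrightarrow> norm (f x' - f x) \<le> e"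
  shows "norm (riemann_sum f a b n - integral {a..b} f) \<le> e * (b - a)"
proof -
  define h where "h = (b - a) / real n"
  have h: "0 \<le> h" "a + real n * h = b" using n ab by (auto simp: h_def)
  have cell: "norm (integral {a + real k * h..a + real k * h + h} f - h *\<^sub>R f (a + real k * h)) \<le> e * h"
    if k: "k < n" for k
  proof (rule integral_cell_estimate)
    have "real k * h + h = real (Suc k) * h" by (simp add: algebra_simps)
    also have "\<dots> \<le> real n * h" using k h by (intro mult_right_mono) auto
    finally have "real k * h + h \<le> real n * h" .
    moreover have "0 \<le> real k * h" using h by simp
    ultimately have sub: "{a + real k * h..a + real k * h + h} \<subseteq> {a..b}" using h by auto
    show "continuous_on {a + real k * h..a + real k * h + h} f" using continuous_on_subset[OF f sub] .
    fix t assume t: "t \<in> {a + real k * h..a + real k * h + h}"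
    have "a + real k * h \<in> {a..b}" using h by (intro subsetD[OF sub]) auto
    moreover have "t \<in> {a..b}" using t sub by blast
    moreover have "dist t (a + real k * h) \<le> (b - a) / real n" using t by (auto simp: h_def dist_real_def)
    ultimately show "norm (f t - f (a + real k * h)) \<le> e" by (rule close)
  qed (use h in auto)
  have "norm (riemann_sum f a b n - integral {a..b} f)
      = norm (\<Sum>k<n. integral {a + real k * h..a + real k * h + h} f - h *\<^sub>R f (a + real k * h))"
    using integral_uniform_split[of h a n f] h f
    by (simp add: riemann_sum_def h_def[symmetric] sum_subtractf norm_minus_commute)
  also have "\<dots> \<le> (\<Sum>k<n. e * h)"
    using cell by (intro order_trans[OF norm_sum] sum_mono) auto
  also have "\<dots> = e * (real n * h)" by simp
  also have "real n * h = b - a" using h(2) by simp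
  finally show ?thesis .
qed

lemma riemann_sum_tendsto_integral:
  fixes f :: "real \<Rightarrow> 'a::banach"
  assumes ab: "a < b" and f: "continuous_on {a..b} f"
  shows "riemann_sum f a b \<longlonglongrightarrow> integral {a..b} f"
proof (rule LIMSEQ_I)
  fix r :: real assume r: "0 < r"
  define e where "e = r / (2 * (b - a))"
  have e: "e > 0" "e * (b - a) < r" using r ab by (auto simp: e_def field_simps)
  obtain d where d: "d > 0"
    and dd: "\<And>x x'. x \<in> {a..b} \<Longrightarrow> x' \<in> {a..b} \<Longrightarrow> dist x' x < d \<Longrightarrow> dist (f x') (f x) < e"
    using compact_uniformly_continuous[OF f compact_Icc] e unfolding uniformly_continuous_on_def by metis
  obtain N :: nat where N: "(b - a) / d < real N" using reals_Archimedean2 by blast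
  have "norm (riemann_sum f a b n - integral {a..b} f) \<le> e * (b - a)" if n: "n \<ge> Suc N" for n
  proof (rule riemann_sum_error_le[OF less_imp_le[OF ab] _ f])
    have "(b - a) / d < real n" using N n by linarith
    then have "(b - a) / real n < d" using n d by (simp add: field_simps)
    then show "norm (f x' - f x) \<le> e"
      if "x \<in> {a..b}" "x' \<in> {a..b}" "dist x' x \<le> (b - a) / real n" for x x'
      using dd[OF that(1,2)] that(3) by (simp add: dist_norm)
  qed (use n in auto)
  then show "\<exists>no. \<forall>n\<ge>no. norm (riemann_sum f a b n - integral {a..b} f) < r"
    using e(2) by (meson le_less_trans)
qed

lemma integral_in_closed_cone:
  fixes f :: "real \<Rightarrow> 'a::banach" and a b :: real
  assumes S: "closed S" "0 \<in> S" "\<And>x y. x \<in> S \<Longrightarrow> y \<in> S \<Longrightarrow> x + y \<in> S"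
      "\<And>c x. 0 \<le> c \<Longrightarrow> x \<in> S \<Longrightarrow> c *\<^sub>R x \<in> S"
    and ab: "a \<le> b" and f: "continuous_on {a..b} f" and fS: "\<And>t. t \<in> {a..b} \<Longrightarrow> f t \<in> S"
  shows "integral {a..b} f \<in> S"
proof (cases "a = b")
  case True
  then show ?thesis using S(2) by simp
next
  case False
  have sum_in: "(\<Sum>k\<in>I. g k) \<in> S" if "finite I" "\<And>k. k \<in> I \<Longrightarrow> g k \<in> S" for I g
    using that by (induction I rule: finite_induct) (auto intro: S(2,3))
  have "riemann_sum f a b n \<in> S" for n
    unfolding riemann_sum_def
    using ab riemann_point_in_interval[OF _ ab] by (intro sum_in S(4) fS) auto
  then show ?thesis
    using closed_sequentially[OF S(1) _ riemann_sum_tendsto_integral[OF _ f]] False ab by simp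
qed

lemma integral_nonneg_banach_lattice:
  fixes f :: "real \<Rightarrow> 'a::banach_lattice" and a b :: real
  assumes "a \<le> b" "continuous_on {a..b} f" "\<And>t. t \<in> {a..b} \<Longrightarrow> 0 \<le> f t"
  shows "0 \<le> integral {a..b} f"
proof -
  have "integral {a..b} f \<in> {x. 0 \<le> x}"
    by (rule integral_in_closed_cone[OF closed_nonneg_cone]) (use assms in \<open>auto simp: scaleR_nonneg_nonneg\<close>)
  then show ?thesis by simp
qed

lemma
  assumes "linear_on_sub S f"
  shows linear_on_sub_subspace: "subspace S"
    and linear_on_sub_add: "x \<in> S \<Longrightarrow> y \<in> S \<Longrightarrow> f (x + y) = f x + f y"
    and linear_on_sub_scale: "x \<in> S \<Longrightarrow> f (c *\<^sub>R x) = c *\<^sub>R f x"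
  using assms unfolding linear_on_sub_def by blast+

lemma linear_on_sub_diff:
  assumes f: "linear_on_sub S f" and "x \<in> S" "y \<in> S"
  shows "f (x - y) = f x - f y"
proof -
  have "f (x + (-1) *\<^sub>R y) = f x + (-1) *\<^sub>R f y"
    using linear_on_sub_add[OF f] linear_on_sub_scale[OF f] assms
      subspace_mul[OF linear_on_sub_subspace[OF f]] by metis
  then show ?thesis by simp
qed

lemma linear_on_sub_zero: "linear_on_sub S f \<Longrightarrow> f 0 = 0"
  using linear_on_sub_scale[of S f 0 0] linear_on_sub_subspace subspace_0 by fastforce

lemma graph_bounded_le:
  assumes "graph_bounded Dom Op F"
  obtains C where "C \<ge> 0" "\<And>x. x \<in> Dom \<Longrightarrow> norm (F x) \<le> C * (norm x + norm (Op x))"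
proof -
  obtain C where C: "\<forall>x\<in>Dom. norm (F x) \<le> C * (norm x + norm (Op x))"
    using assms unfolding graph_bounded_def by blast
  have "norm (F x) \<le> max C 0 * (norm x + norm (Op x))" if "x \<in> Dom" for x
    using C that by (meson max.cobounded1 mult_right_mono norm_ge_zero add_nonneg_nonneg order_trans)
  then show ?thesis using that[of "max C 0"] by simp
qed

lemma graph_bounded_diff_le:
  assumes Op: "linear_on_sub Dom Op" and F: "graph_bounded Dom Op F"
  obtains C where "C \<ge> 0"
    "\<And>x y. x \<in> Dom \<Longrightarrow> y \<in> Dom \<Longrightarrow> norm (F x - F y) \<le> C * (norm (x - y) + norm (Op x - Op y))"
proof -
  obtain C where C: "C \<ge> 0" "\<And>x. x \<in> Dom \<Longrightarrow> norm (F x) \<le> C * (norm x + norm (Op x))"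
    using graph_bounded_le[OF F] by blast
  have F_lin: "linear_on_sub Dom F" using F unfolding graph_bounded_def by blast
  have "norm (F x - F y) \<le> C * (norm (x - y) + norm (Op x - Op y))" if "x \<in> Dom" "y \<in> Dom" for x y
    using C(2)[of "x - y"] that linear_on_sub_diff[OF F_lin that] linear_on_sub_diff[OF Op that]
      subspace_diff[OF linear_on_sub_subspace[OF Op] that] by simp
  then show ?thesis using that C(1) by blast
qed

lemma graph_bounded_continuous_on:
  assumes Op: "linear_on_sub Dom Op" and F: "graph_bounded Dom Op F"
    and E: "continuous_on S E" "continuous_on S (\<lambda>t. Op (E t))" "\<And>t. t \<in> S \<Longrightarrow> E t \<in> Dom"
  shows "continuous_on S (\<lambda>t. F (E t))"
  unfolding continuous_on_def
proof
  fix t0 assume t0: "t0 \<in> S"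
  obtain C where C: "C \<ge> 0"
    "\<And>x y. x \<in> Dom \<Longrightarrow> y \<in> Dom \<Longrightarrow> norm (F x - F y) \<le> C * (norm (x - y) + norm (Op x - Op y))"
    using graph_bounded_diff_le[OF Op F] by blast
  have "((\<lambda>t. C * (norm (E t - E t0) + norm (Op (E t) - Op (E t0)))) \<longlongrightarrow> C * (0 + 0)) (at t0 within S)"
    using E(1,2) t0 unfolding continuous_on_def by (intro tendsto_intros tendsto_norm_zero LIM_zero) auto
  moreover have "\<forall>\<^sub>F t in at t0 within S.
      norm (F (E t) - F (E t0)) \<le> C * (norm (E t - E t0) + norm (Op (E t) - Op (E t0)))"
    using E(3) t0 C(2) by (auto simp: eventually_at_filter)
  ultimately have "((\<lambda>t. F (E t) - F (E t0)) \<longlongrightarrow> 0) (at t0 within S)"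
    using Lim_null_comparison by fastforce
  then show "((\<lambda>t. F (E t)) \<longlongrightarrow> F (E t0)) (at t0 within S)" by (rule LIM_zero_cancel)
qed

lemma closed_graph_tendsto:
  assumes cl: "closed {(x, Op x) | x. x \<in> Dom}" and xs: "\<And>n. xs n \<in> Dom"
    and lim: "xs \<longlonglongrightarrow> x" "(\<lambda>n. Op (xs n)) \<longlonglongrightarrow> y"
  shows "x \<in> Dom" "Op x = y"
proof -
  have "(x, y) \<in> {(x, Op x) | x. x \<in> Dom}"
    using closed_sequentially[OF cl _ tendsto_Pair[OF lim]] xs by blast
  then show "x \<in> Dom" "Op x = y" by auto
qed

lemma closed_graph_pair:
  assumes Op: "linear_on_sub Dom Op" and cl: "closed {(x, Op x) | x. x \<in> Dom}"
    and F: "graph_bounded Dom Op F"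
  shows "closed {(x, (Op x, F x)) | x. x \<in> Dom}"
  unfolding closed_sequential_limits
proof (intro allI impI, elim conjE)
  fix s l assume s: "\<forall>n. s n \<in> {(x, (Op x, F x)) | x. x \<in> Dom}" and l: "s \<longlonglongrightarrow> l"
  define xs where "xs n = fst (s n)" for n
  have xs: "xs n \<in> Dom" "s n = (xs n, (Op (xs n), F (xs n)))" for n
  proof -
    obtain x where "s n = (x, (Op x, F x))" "x \<in> Dom" using s by blast
    then show "xs n \<in> Dom" "s n = (xs n, (Op (xs n), F (xs n)))" by (simp_all add: xs_def)
  qed
  obtain C where C: "C \<ge> 0"
    "\<And>x y. x \<in> Dom \<Longrightarrow> y \<in> Dom \<Longrightarrow> norm (F x - F y) \<le> C * (norm (x - y) + norm (Op x - Op y))"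
    using graph_bounded_diff_le[OF Op F] by blast
  have xs_lim: "xs \<longlonglongrightarrow> fst l" "(\<lambda>n. Op (xs n)) \<longlonglongrightarrow> fst (snd l)" "(\<lambda>n. F (xs n)) \<longlonglongrightarrow> snd (snd l)"
    using tendsto_fst[OF l] tendsto_fst[OF tendsto_snd[OF l]] tendsto_snd[OF tendsto_snd[OF l]]
    by (simp_all add: xs(2))
  have x: "fst l \<in> Dom" "fst (snd l) = Op (fst l)"
    using closed_graph_tendsto[OF cl xs(1) xs_lim(1,2)] by auto
  have "(\<lambda>n. C * (norm (xs n - fst l) + norm (Op (xs n) - Op (fst l)))) \<longlonglongrightarrow> C * (0 + 0)"
    using xs_lim(1,2) x(2) by (intro tendsto_intros tendsto_norm_zero LIM_zero) auto
  moreover have "\<forall>n. norm (F (xs n) - F (fst l)) \<le> C * (norm (xs n - fst l) + norm (Op (xs n) - Op (fst l)))"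
    using C(2)[OF xs(1) x(1)] by blast
  ultimately have "(\<lambda>n. F (xs n) - F (fst l)) \<longlonglongrightarrow> 0"
    using Lim_null_comparison[OF always_eventually] by fastforce
  then have "snd (snd l) = F (fst l)"
    using LIMSEQ_unique[OF xs_lim(3) LIM_zero_cancel] by blast
  then have "l = (fst l, (Op (fst l), F (fst l)))" using x(2) by (simp add: prod_eq_iff)
  then show "l \<in> {(x, (Op x, F x)) | x. x \<in> Dom}" using x(1) by blast
qed

lemma integral_closed_graph:
  fixes Op :: "'a::banach \<Rightarrow> 'b::banach" and a b :: real
  assumes Op: "linear_on_sub Dom Op" and cl: "closed {(x, Op x) | x. x \<in> Dom}"
    and ab: "a \<le> b" and E: "continuous_on {a..b} E" "continuous_on {a..b} (\<lambda>t. Op (E t))"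
      "\<And>t. t \<in> {a..b} \<Longrightarrow> E t \<in> Dom"
  shows "integral {a..b} E \<in> Dom" "Op (integral {a..b} E) = integral {a..b} (\<lambda>t. Op (E t))"
proof -
  let ?g = "\<lambda>t. (E t, Op (E t))"
  have sub: "subspace Dom" by (rule linear_on_sub_subspace[OF Op])
  have "integral {a..b} ?g \<in> {(x, Op x) | x. x \<in> Dom}"
  proof (rule integral_in_closed_cone[OF cl _ _ _ ab])
    show "0 \<in> {(x, Op x) | x. x \<in> Dom}"
      using linear_on_sub_zero[OF Op] subspace_0[OF sub] by (force simp: zero_prod_def)
    show "p + q \<in> {(x, Op x) | x. x \<in> Dom}"
      if "p \<in> {(x, Op x) | x. x \<in> Dom}" "q \<in> {(x, Op x) | x. x \<in> Dom}" for p q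
      using that linear_on_sub_add[OF Op] subspace_add[OF sub] by force
    show "c *\<^sub>R p \<in> {(x, Op x) | x. x \<in> Dom}" if "p \<in> {(x, Op x) | x. x \<in> Dom}" for c p
      using that linear_on_sub_scale[OF Op] subspace_mul[OF sub] by force
  next
    show "continuous_on {a..b} ?g" using E(1,2) by (rule continuous_on_Pair)
  next
    show "?g t \<in> {(x, Op x) | x. x \<in> Dom}" if "t \<in> {a..b}" for t using E(3)[OF that] by blast
  qed
  moreover have "integral {a..b} ?g = (integral {a..b} E, integral {a..b} (\<lambda>t. Op (E t)))"
  proof -
    have g: "?g integrable_on {a..b}" by (intro integrable_continuous_real continuous_on_Pair E)
    show ?thesis
      using integral_linear[OF g bounded_linear_fst] integral_linear[OF g bounded_linear_snd]
      by (simp add: o_def prod_eq_iff)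
  qed
  ultimately show "integral {a..b} E \<in> Dom" "Op (integral {a..b} E) = integral {a..b} (\<lambda>t. Op (E t))"
    by auto
qed

section \<open>Positive semigroups and their Laplace transform\<close>

lemma Cauchy_if_tail_bound:
  fixes X :: "nat \<Rightarrow> 'a::real_normed_vector"
  assumes bound: "\<And>m n. n \<le> m \<Longrightarrow> norm (X m - X n) \<le> g n" and g: "g \<longlonglongrightarrow> 0"
  shows "Cauchy X"
proof (rule metric_CauchyI)
  fix e :: real assume "e > 0"
  then obtain N where "\<forall>n\<ge>N. norm (g n - 0) < e / 2" using LIMSEQ_D[OF g, of "e / 2"] by auto
  then have N: "g N < e / 2" by auto
  have "dist (X m) (X n) < e" if "m \<ge> N" "n \<ge> N" for m n
  proof -
    have "dist (X m) (X n) \<le> norm (X m - X N) + norm (X n - X N)"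
      using norm_triangle_ineq4[of "X m - X N" "X n - X N"] by (simp add: dist_norm)
    also have "\<dots> \<le> g N + g N" using bound that by (intro add_mono) auto
    finally show ?thesis using N by simp
  qed
  then show "\<exists>M. \<forall>m\<ge>M. \<forall>n\<ge>M. dist (X m) (X n) < e" by blast
qed

lemma exp_integral:
  fixes k b c :: real
  assumes k: "k \<noteq> 0" and bc: "b \<le> c"
  shows "integral {b..c} (\<lambda>t. exp (k * t)) = (exp (k * c) - exp (k * b)) / k"
proof -
  have "((\<lambda>t. exp (k * t)) has_integral (exp (k * c) / k - exp (k * b) / k)) {b..c}"
  proof (rule fundamental_theorem_of_calculus[OF bc])
    fix x assume "x \<in> {b..c}"
    have "((\<lambda>t. exp (k * t) / k) has_real_derivative exp (k * x)) (at x within {b..c})"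
      using k by (auto intro!: derivative_eq_intros)
    then show "((\<lambda>t. exp (k * t) / k) has_vector_derivative exp (k * x)) (at x within {b..c})"
      by (simp add: has_real_derivative_iff_has_vector_derivative)
  qed
  then show ?thesis by (simp add: integral_unique diff_divide_distrib)
qed

lemma exp_difference_quotient_tendsto: "((\<lambda>s. (exp (l * s) - 1) / s) \<longlongrightarrow> (l::real)) (at_right 0)"
proof -
  have "((\<lambda>s. exp (l * s)) has_field_derivative exp (l * 0) * l) (at 0)"
    by (auto intro!: derivative_eq_intros)
  then have "((\<lambda>y. (exp (l * y) - exp (l * 0)) / (y - 0)) \<longlongrightarrow> exp (l * 0) * l) (at 0)"
    by (rule has_field_derivative_iff[THEN iffD1])
  then have "((\<lambda>s. (exp (l * s) - 1) / s) \<longlongrightarrow> l) (at 0)" by simp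
  then show ?thesis by (rule tendsto_mono[rotated]) (simp add: at_within_le_at)
qed

lemma exp_neg_tendsto_at_top: "(k::real) < 0 \<Longrightarrow> ((\<lambda>b. exp (k * b)) \<longlongrightarrow> 0) at_top"
  by (rule filterlim_compose[OF exp_at_bot filterlim_tendsto_neg_mult_at_bot[OF tendsto_const _ filterlim_ident]])

locale boundary_semigroup =
  fixes At :: "'x::banach_lattice \<Rightarrow> 'x" and Dt :: "'x set" and G :: "'x \<Rightarrow> 'v::real_normed_vector"
    and T :: "real \<Rightarrow> 'x \<Rightarrow> 'x" and M \<omega> :: real
  assumes op: "closed_dense_operator Dt At"
    and G_bdd: "graph_bounded Dt At G"
    and G_surj: "G ` Dt = UNIV"
    and gen: "generates {x \<in> Dt. G x = 0} At T"
    and T_nonneg: "\<And>t x. 0 \<le> t \<Longrightarrow> 0 \<le> x \<Longrightarrow> 0 \<le> T t x"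
    and M: "1 \<le> M" and \<omega>: "0 \<le> \<omega>"
    and T_bound: "\<And>t x. 0 \<le> t \<Longrightarrow> norm (T t x) \<le> M * exp (\<omega> * t) * norm x"
begin

abbreviation "DA \<equiv> {x \<in> Dt. G x = 0}"

lemma At_linear: "linear_on_sub Dt At"
  and At_graph_closed: "closed {(x, At x) | x. x \<in> Dt}"
  using op unfolding closed_dense_operator_def by blast+

lemma Dt_subspace: "subspace Dt"
  using linear_on_sub_subspace[OF At_linear] .

lemma G_linear: "linear_on_sub Dt G"
  using G_bdd unfolding graph_bounded_def by blast

lemma At_diff: "x \<in> Dt \<Longrightarrow> y \<in> Dt \<Longrightarrow> At (x - y) = At x - At y"
  using linear_on_sub_diff[OF At_linear] .

lemma G_diff: "x \<in> Dt \<Longrightarrow> y \<in> Dt \<Longrightarrow> G (x - y) = G x - G y"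
  using linear_on_sub_diff[OF G_linear] .

lemma DA_scale: "x \<in> DA \<Longrightarrow> c *\<^sub>R x \<in> DA"
  using subspace_mul[OF Dt_subspace] linear_on_sub_scale[OF G_linear] by auto

lemma T_linear: "0 \<le> t \<Longrightarrow> bounded_linear (T t)"
  and T_0: "T 0 x = x"
  and T_add: "0 \<le> s \<Longrightarrow> 0 \<le> t \<Longrightarrow> T (s + t) x = T s (T t x)"
  and T_tendsto_at_right_0: "((\<lambda>t. T t x) \<longlongrightarrow> x) (at_right 0)"
  using gen unfolding generates_def C0_semigroup_def by auto

lemma T_diff: "0 \<le> t \<Longrightarrow> T t (x - y) = T t x - T t y"
  and T_scale: "0 \<le> t \<Longrightarrow> T t (c *\<^sub>R x) = c *\<^sub>R T t x"
  using T_linear linear_diff linear_scale bounded_linear.linear by blast+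

lemma T_commute: "0 \<le> s \<Longrightarrow> 0 \<le> t \<Longrightarrow> T s (T t x) = T t (T s x)"
  by (metis T_add add.commute)

lemma generator_tendsto: "x \<in> DA \<Longrightarrow> ((\<lambda>h. (1 / h) *\<^sub>R (T h x - x)) \<longlongrightarrow> At x) (at_right 0)"
  using gen unfolding generates_def by blast

lemma generator_domainI:
  assumes "((\<lambda>h. (1 / h) *\<^sub>R (T h z - z)) \<longlongrightarrow> w) (at_right 0)"
  shows "z \<in> DA" "At z = w"
proof -
  show "z \<in> DA" using assms gen unfolding generates_def by blast
  then show "At z = w" using generator_tendsto tendsto_unique[OF trivial_limit_at_right_real] assms by blast
qed

lemma T_increment_le:
  assumes "0 \<le> s" "0 \<le> h"
  shows "norm (T (s + h) y - T s y) \<le> M * exp (\<omega> * s) * norm (T h y - y)"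
  using T_bound[OF assms(1), of "T h y - y"] assms by (simp add: T_add T_diff)

lemma T_continuous: "continuous_on {0..} (\<lambda>t. T t y)"
  unfolding continuous_on_iff
proof (intro ballI allI impI)
  fix t0 e :: real assume t0: "t0 \<in> {0..}" and e: "0 < e"
  define K where "K = M * exp (\<omega> * (t0 + 1))"
  have K: "K > 0" using M by (simp add: K_def)
  have K_ge: "M * exp (\<omega> * s) \<le> K" if "s \<le> t0 + 1" for s
    using M \<omega> that by (simp add: K_def mult_left_mono)
  obtain d where d: "d > 0" and dd: "\<And>h. h > 0 \<Longrightarrow> h < d \<Longrightarrow> dist (T h y) y < e / K"
    using tendstoD[OF T_tendsto_at_right_0, of "e / K"] e K unfolding eventually_at_right_field by auto
  have small: "K * norm (T h y - y) < e" if "0 \<le> h" "h < d" for h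
  proof (cases "h = 0")
    case False
    then have "norm (T h y - y) < e / K" using dd[of h] that by (simp add: dist_norm)
    then show ?thesis using K by (simp add: field_simps)
  qed (use e in \<open>simp add: T_0\<close>)
  have "dist (T t y) (T t0 y) < e" if t: "0 \<le> t" "dist t t0 < min d 1" for t
  proof -
    define s h where "s = min t t0" and "h = \<bar>t - t0\<bar>"
    have sh: "0 \<le> s" "0 \<le> h" "h < d" "s \<le> t0 + 1" using t t0 by (auto simp: s_def h_def dist_real_def)
    have "dist (T t y) (T t0 y) = norm (T (s + h) y - T s y)"
      by (cases "t \<le> t0") (auto simp: s_def h_def dist_norm norm_minus_commute)
    also have "\<dots> \<le> K * norm (T h y - y)"
      using T_increment_le[OF sh(1,2)] K_ge[OF sh(4)] by (meson mult_right_mono norm_ge_zero order_trans)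
    also have "\<dots> < e" using small sh by blast
    finally show ?thesis .
  qed
  then show "\<exists>d>0. \<forall>t\<in>{0..}. dist t t0 < d \<longrightarrow> dist (T t y) (T t0 y) < e"
    using d by (intro exI[of _ "min d 1"]) auto
qed

lemma T_continuous_on: "S \<subseteq> {0..} \<Longrightarrow> continuous_on S (\<lambda>t. T t y)"
  using continuous_on_subset[OF T_continuous] by blast

lemma T_DA:
  assumes x: "x \<in> DA" and t: "0 \<le> t"
  shows "T t x \<in> DA" "At (T t x) = T t (At x)"
proof -
  have "((\<lambda>h. T t ((1 / h) *\<^sub>R (T h x - x))) \<longlongrightarrow> T t (At x)) (at_right 0)"
    by (rule bounded_linear.tendsto[OF T_linear[OF t] generator_tendsto[OF x]])
  moreover have "T t ((1 / h) *\<^sub>R (T h x - x)) = (1 / h) *\<^sub>R (T h (T t x) - T t x)" if "0 < h" for h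
    using that t by (simp add: T_scale T_diff T_commute)
  ultimately have "((\<lambda>h. (1 / h) *\<^sub>R (T h (T t x) - T t x)) \<longlongrightarrow> T t (At x)) (at_right 0)"
    by (rule Lim_transform_eventually[OF _ eventually_at_rightI[of 0 1]]) auto
  then show "T t x \<in> DA" "At (T t x) = T t (At x)" using generator_domainI by blast+
qed

end

context boundary_semigroup
begin

definition laplace_trunc :: "real \<Rightarrow> real \<Rightarrow> 'x \<Rightarrow> 'x" where
  "laplace_trunc l b y = integral {0..b} (\<lambda>t. exp (- l * t) *\<^sub>R T t y)"

text \<open>For \<open>l > \<omega>\<close> this is the resolvent \<open>R(l)\<close>; for \<open>l \<le> \<omega>\<close> the limit may not exist and the
  value is unspecified.\<close>

definition laplace :: "real \<Rightarrow> 'x \<Rightarrow> 'x" where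
  "laplace l y = lim (\<lambda>n. laplace_trunc l (real n) y)"

lemma laplace_integrand_continuous_on: "S \<subseteq> {0..} \<Longrightarrow> continuous_on S (\<lambda>t. exp (- l * t) *\<^sub>R T t y)"
  by (intro continuous_intros T_continuous_on)

lemma laplace_integrand_integrable: "0 \<le> a \<Longrightarrow> (\<lambda>t. exp (- l * t) *\<^sub>R T t y) integrable_on {a..b}"
  by (rule integrable_continuous_real[OF laplace_integrand_continuous_on]) auto

lemma laplace_trunc_diff_eq:
  "0 \<le> b \<Longrightarrow> b \<le> c \<Longrightarrow> laplace_trunc l c y - laplace_trunc l b y = integral {b..c} (\<lambda>t. exp (- l * t) *\<^sub>R T t y)"
proof -
  assume "0 \<le> b" "b \<le> c"
  then have "integral {0..b} (\<lambda>t. exp (- l * t) *\<^sub>R T t y) + integral {b..c} (\<lambda>t. exp (- l * t) *\<^sub>R T t y)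
      = integral {0..c} (\<lambda>t. exp (- l * t) *\<^sub>R T t y)"
    by (intro Henstock_Kurzweil_Integration.integral_combine laplace_integrand_integrable) auto
  then show ?thesis unfolding laplace_trunc_def by (simp add: algebra_simps)
qed

lemma laplace_trunc_linear: "linear (laplace_trunc l b)"
proof (rule linearI)
  show "laplace_trunc l b (y + z) = laplace_trunc l b y + laplace_trunc l b z" for y z
    unfolding laplace_trunc_def
    by (subst integral_add[OF laplace_integrand_integrable laplace_integrand_integrable, symmetric])
      (auto intro!: integral_cong simp: linear_add[OF bounded_linear.linear[OF T_linear]] scaleR_add_right)
  show "laplace_trunc l b (c *\<^sub>R y) = c *\<^sub>R laplace_trunc l b y" for c y
    unfolding laplace_trunc_def
    by (subst integral_cmul[symmetric]) (auto intro!: integral_cong simp: T_scale)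
qed

lemma laplace_trunc_tail_le:
  assumes l: "l > \<omega>" and b: "0 \<le> b" "b \<le> c"
  shows "norm (laplace_trunc l c y - laplace_trunc l b y) \<le> M * norm y * exp ((\<omega> - l) * b) / (l - \<omega>)"
proof -
  have "norm (laplace_trunc l c y - laplace_trunc l b y)
      \<le> integral {b..c} (\<lambda>t. (M * norm y) * exp ((\<omega> - l) * t))"
    unfolding laplace_trunc_diff_eq[OF b]
  proof (rule integral_norm_bound_integral)
    show "(\<lambda>t. exp (- l * t) *\<^sub>R T t y) integrable_on {b..c}" using laplace_integrand_integrable b by simp
    show "(\<lambda>t. (M * norm y) * exp ((\<omega> - l) * t)) integrable_on {b..c}"
      by (intro integrable_continuous_real continuous_intros)
    fix t assume "t \<in> {b..c}"
    then have "exp (- l * t) * norm (T t y) \<le> exp (- l * t) * (M * exp (\<omega> * t) * norm y)"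
      using T_bound b by (intro mult_left_mono) auto
    then show "norm (exp (- l * t) *\<^sub>R T t y) \<le> (M * norm y) * exp ((\<omega> - l) * t)"
      by (simp add: algebra_simps exp_add[symmetric])
  qed
  also have "\<dots> = (M * norm y) * ((exp ((\<omega> - l) * c) - exp ((\<omega> - l) * b)) / (\<omega> - l))"
    using exp_integral[of "\<omega> - l" b c] l b by simp
  also have "\<dots> = (M * norm y) * ((exp ((\<omega> - l) * b) - exp ((\<omega> - l) * c)) / (l - \<omega>))"
    by (metis minus_diff_eq minus_divide_divide)
  also have "\<dots> \<le> (M * norm y) * (exp ((\<omega> - l) * b) / (l - \<omega>))"
    using l M by (intro mult_left_mono divide_right_mono) auto
  finally show ?thesis by simp
qed

lemma laplace_trunc_LIMSEQ:
  assumes l: "l > \<omega>"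
  shows "(\<lambda>n. laplace_trunc l (real n) y) \<longlonglongrightarrow> laplace l y"
proof -
  let ?g = "\<lambda>n. M * norm y * exp ((\<omega> - l) * real n) / (l - \<omega>)"
  have "?g \<longlonglongrightarrow> M * norm y * 0 / (l - \<omega>)"
    using l by (intro tendsto_intros filterlim_compose[OF exp_neg_tendsto_at_top filterlim_real_sequentially]) auto
  then have "Cauchy (\<lambda>n. laplace_trunc l (real n) y)"
    using laplace_trunc_tail_le[OF l] by (intro Cauchy_if_tail_bound[where g = ?g]) auto
  then show ?thesis unfolding laplace_def by (simp add: Cauchy_convergent_iff convergent_LIMSEQ_iff)
qed

lemma laplace_tail_le:
  assumes l: "l > \<omega>" and b: "0 \<le> b"
  shows "norm (laplace l y - laplace_trunc l b y) \<le> M * norm y * exp ((\<omega> - l) * b) / (l - \<omega>)"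
proof (rule tendsto_le[OF trivial_limit_sequentially tendsto_const])
  show "(\<lambda>n. norm (laplace_trunc l (real n) y - laplace_trunc l b y)) \<longlonglongrightarrow> norm (laplace l y - laplace_trunc l b y)"
    by (intro tendsto_norm tendsto_diff laplace_trunc_LIMSEQ l tendsto_const)
  obtain N :: nat where "b \<le> real N" using real_arch_simple by blast
  then show "\<forall>\<^sub>F n in sequentially. norm (laplace_trunc l (real n) y - laplace_trunc l b y)
      \<le> M * norm y * exp ((\<omega> - l) * b) / (l - \<omega>)"
    unfolding eventually_sequentially by (intro exI[of _ N] allI impI laplace_trunc_tail_le[OF l b]) auto
qed

lemma laplace_norm_le: "l > \<omega> \<Longrightarrow> norm (laplace l y) \<le> M * norm y / (l - \<omega>)"
  using laplace_tail_le[of l 0 y] by (simp add: laplace_trunc_def)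

lemma laplace_trunc_tendsto:
  assumes l: "l > \<omega>"
  shows "((\<lambda>b. laplace_trunc l b y) \<longlongrightarrow> laplace l y) at_top"
proof -
  let ?g = "\<lambda>b. M * norm y * exp ((\<omega> - l) * b) / (l - \<omega>)"
  have "(?g \<longlongrightarrow> M * norm y * 0 / (l - \<omega>)) at_top"
    using l by (intro tendsto_intros exp_neg_tendsto_at_top) auto
  moreover have "\<forall>\<^sub>F b in at_top. norm (laplace_trunc l b y - laplace l y) \<le> ?g b"
    using eventually_ge_at_top[of 0] by eventually_elim (use laplace_tail_le[OF l] in \<open>simp add: norm_minus_commute\<close>)
  ultimately have "((\<lambda>b. laplace_trunc l b y - laplace l y) \<longlongrightarrow> 0) at_top"
    using Lim_null_comparison by fastforce
  then show ?thesis by (rule LIM_zero_cancel)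
qed

lemma laplace_linear:
  assumes l: "l > \<omega>"
  shows "linear (laplace l)"
proof (rule linearI)
  show "laplace l (y + z) = laplace l y + laplace l z" for y z
    using tendsto_add[OF laplace_trunc_LIMSEQ[OF l] laplace_trunc_LIMSEQ[OF l], of y z]
      LIMSEQ_unique[OF laplace_trunc_LIMSEQ[OF l, of "y + z"]]
    by (simp add: linear_add[OF laplace_trunc_linear])
  show "laplace l (c *\<^sub>R y) = c *\<^sub>R laplace l y" for c y
    using tendsto_scaleR[OF tendsto_const laplace_trunc_LIMSEQ[OF l], of c y]
      LIMSEQ_unique[OF laplace_trunc_LIMSEQ[OF l, of "c *\<^sub>R y"]]
    by (simp add: linear_scale[OF laplace_trunc_linear])
qed

lemma T_laplace_trunc:
  assumes s: "0 \<le> s" and b: "0 \<le> b"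
  shows "T s (laplace_trunc l b y) = exp (l * s) *\<^sub>R (laplace_trunc l (s + b) y - laplace_trunc l s y)"
proof -
  let ?g = "\<lambda>t. exp (- l * t) *\<^sub>R T t y"
  have "T s (laplace_trunc l b y) = integral {0..b} (T s \<circ> ?g)"
    unfolding laplace_trunc_def by (rule integral_linear[OF laplace_integrand_integrable T_linear[OF s], symmetric]) simp
  also have "\<dots> = integral {0..b} (\<lambda>t. exp (l * s) *\<^sub>R (?g \<circ> (+) s) t)"
  proof (rule integral_cong)
    fix t assume "t \<in> {0..b}"
    then have "(T s \<circ> ?g) t = (exp (l * s) * exp (- l * (s + t))) *\<^sub>R T (s + t) y"
      using s by (simp add: T_scale T_add exp_add[symmetric] algebra_simps)
    then show "(T s \<circ> ?g) t = exp (l * s) *\<^sub>R (?g \<circ> (+) s) t" by simp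
  qed
  also have "\<dots> = exp (l * s) *\<^sub>R integral {0 + s..b + s} ?g"
    by (simp only: integral_cmul integral_shift_Icc_real)
  also have "integral {0 + s..b + s} ?g = laplace_trunc l (s + b) y - laplace_trunc l s y"
    using laplace_trunc_diff_eq[of s "s + b" l y] s b by (simp add: add.commute)
  finally show ?thesis .
qed

lemma laplace_trunc_average:
  assumes b: "0 \<le> b"
  shows "((\<lambda>s. (1 / s) *\<^sub>R (laplace_trunc l (b + s) y - laplace_trunc l b y)) \<longlongrightarrow> exp (- l * b) *\<^sub>R T b y) (at_right 0)"
proof (rule Lim_transform_eventually)
  show "((\<lambda>s. (1 / s) *\<^sub>R integral {b..b + s} (\<lambda>t. exp (- l * t) *\<^sub>R T t y)) \<longlongrightarrow> exp (- l * b) *\<^sub>R T b y) (at_right 0)"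
    by (rule integral_average_tendsto[OF laplace_integrand_continuous_on]) (use b in auto)
  show "\<forall>\<^sub>F s in at_right 0. (1 / s) *\<^sub>R integral {b..b + s} (\<lambda>t. exp (- l * t) *\<^sub>R T t y)
      = (1 / s) *\<^sub>R (laplace_trunc l (b + s) y - laplace_trunc l b y)"
    using eventually_at_right_less[of 0] by eventually_elim (use laplace_trunc_diff_eq[of b] b in simp)
qed

lemma laplace_trunc_average_0: "((\<lambda>s. (1 / s) *\<^sub>R laplace_trunc l s y) \<longlongrightarrow> y) (at_right 0)"
  using laplace_trunc_average[of 0 l y] by (simp add: T_0 laplace_trunc_def)

lemma exp_tendsto_at_right_0: "((\<lambda>s. exp (l * s)) \<longlongrightarrow> 1) (at_right (0::real))"
  using tendsto_exp[OF tendsto_mult_left[OF tendsto_ident_at, of l 0 "{0<..}"]] by simp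

lemma laplace_trunc_DA:
  assumes b: "0 \<le> b"
  shows "laplace_trunc l b y \<in> DA"
    "At (laplace_trunc l b y) = exp (- l * b) *\<^sub>R T b y + l *\<^sub>R laplace_trunc l b y - y"
proof -
  let ?F = "laplace_trunc l"
  have "((\<lambda>s. exp (l * s) *\<^sub>R ((1 / s) *\<^sub>R (?F (b + s) y - ?F b y)) + ((exp (l * s) - 1) / s) *\<^sub>R ?F b y
       - exp (l * s) *\<^sub>R ((1 / s) *\<^sub>R ?F s y))
      \<longlongrightarrow> 1 *\<^sub>R (exp (- l * b) *\<^sub>R T b y) + l *\<^sub>R ?F b y - 1 *\<^sub>R y) (at_right 0)"
    by (intro tendsto_intros exp_tendsto_at_right_0 laplace_trunc_average b laplace_trunc_average_0
        exp_difference_quotient_tendsto)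
  moreover have "\<forall>\<^sub>F s in at_right 0.
      exp (l * s) *\<^sub>R ((1 / s) *\<^sub>R (?F (b + s) y - ?F b y)) + ((exp (l * s) - 1) / s) *\<^sub>R ?F b y
       - exp (l * s) *\<^sub>R ((1 / s) *\<^sub>R ?F s y) = (1 / s) *\<^sub>R (T s (?F b y) - ?F b y)"
    using eventually_at_right_less[of 0]
    by eventually_elim (simp add: T_laplace_trunc b add.commute algebra_simps diff_divide_distrib scaleR_diff_left)
  ultimately have "((\<lambda>s. (1 / s) *\<^sub>R (T s (?F b y) - ?F b y)) \<longlongrightarrow> exp (- l * b) *\<^sub>R T b y + l *\<^sub>R ?F b y - y) (at_right 0)"
    using Lim_transform_eventually by fastforce
  then show "?F b y \<in> DA" "At (?F b y) = exp (- l * b) *\<^sub>R T b y + l *\<^sub>R ?F b y - y"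
    using generator_domainI by blast+
qed

lemma T_laplace:
  assumes l: "l > \<omega>" and s: "0 \<le> s"
  shows "T s (laplace l y) = exp (l * s) *\<^sub>R (laplace l y - laplace_trunc l s y)"
proof -
  have lim: "((\<lambda>b. T s (laplace_trunc l b y)) \<longlongrightarrow> T s (laplace l y)) at_top"
    by (rule bounded_linear.tendsto[OF T_linear[OF s] laplace_trunc_tendsto[OF l]])
  have "((\<lambda>b. laplace_trunc l (s + b) y) \<longlongrightarrow> laplace l y) at_top"
    by (rule filterlim_compose[OF laplace_trunc_tendsto[OF l] filterlim_tendsto_add_at_top[OF tendsto_const filterlim_ident]])
  then have "((\<lambda>b. exp (l * s) *\<^sub>R (laplace_trunc l (s + b) y - laplace_trunc l s y))
      \<longlongrightarrow> exp (l * s) *\<^sub>R (laplace l y - laplace_trunc l s y)) at_top"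
    by (intro tendsto_intros)
  moreover have "\<forall>\<^sub>F b in at_top. exp (l * s) *\<^sub>R (laplace_trunc l (s + b) y - laplace_trunc l s y) = T s (laplace_trunc l b y)"
    using eventually_ge_at_top[of 0] by eventually_elim (use T_laplace_trunc s in simp)
  ultimately have "((\<lambda>b. T s (laplace_trunc l b y)) \<longlongrightarrow> exp (l * s) *\<^sub>R (laplace l y - laplace_trunc l s y)) at_top"
    by (rule Lim_transform_eventually)
  then show ?thesis using tendsto_unique[OF trivial_limit_at_top_linorder lim] by blast
qed

lemma laplace_DA:
  assumes l: "l > \<omega>"
  shows "laplace l y \<in> DA" "At (laplace l y) = l *\<^sub>R laplace l y - y"
proof -
  have "((\<lambda>s. ((exp (l * s) - 1) / s) *\<^sub>R laplace l y - exp (l * s) *\<^sub>R ((1 / s) *\<^sub>R laplace_trunc l s y))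
      \<longlongrightarrow> l *\<^sub>R laplace l y - 1 *\<^sub>R y) (at_right 0)"
    by (intro tendsto_intros exp_tendsto_at_right_0 laplace_trunc_average_0 exp_difference_quotient_tendsto)
  moreover have "\<forall>\<^sub>F s in at_right 0.
      ((exp (l * s) - 1) / s) *\<^sub>R laplace l y - exp (l * s) *\<^sub>R ((1 / s) *\<^sub>R laplace_trunc l s y)
       = (1 / s) *\<^sub>R (T s (laplace l y) - laplace l y)"
    using eventually_at_right_less[of 0]
    by eventually_elim (simp add: T_laplace l algebra_simps diff_divide_distrib scaleR_diff_left)
  ultimately have "((\<lambda>s. (1 / s) *\<^sub>R (T s (laplace l y) - laplace l y)) \<longlongrightarrow> l *\<^sub>R laplace l y - y) (at_right 0)"
    using Lim_transform_eventually by fastforce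
  then show "laplace l y \<in> DA" "At (laplace l y) = l *\<^sub>R laplace l y - y"
    using generator_domainI by blast+
qed

end

section \<open>Resolvent and Dirichlet operators\<close>

context boundary_semigroup
begin

lemma laplace_trunc_commute:
  assumes x: "x \<in> DA" and b: "0 \<le> b"
  shows "At (laplace_trunc l b x) = laplace_trunc l b (At x)"
proof -
  let ?E = "\<lambda>t. exp (- l * t) *\<^sub>R T t x"
  have AE: "At (?E t) = exp (- l * t) *\<^sub>R T t (At x)" if "t \<in> {0..b}" for t
    using linear_on_sub_scale[OF At_linear] T_DA[OF x] that by auto
  have "At (laplace_trunc l b x) = integral {0..b} (\<lambda>t. At (?E t))"
    unfolding laplace_trunc_def
  proof (rule integral_closed_graph(2)[OF At_linear At_graph_closed b])
    show "continuous_on {0..b} ?E" by (rule laplace_integrand_continuous_on) auto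
    show "continuous_on {0..b} (\<lambda>t. At (?E t))"
      by (rule continuous_on_eq[OF laplace_integrand_continuous_on[of "{0..b}" l "At x"]]) (use AE in auto)
    show "?E t \<in> Dt" if "t \<in> {0..b}" for t
      using T_DA(1)[OF x] that subspace_mul[OF Dt_subspace] by auto
  qed
  also have "\<dots> = laplace_trunc l b (At x)"
    unfolding laplace_trunc_def by (rule integral_cong) (rule AE)
  finally show ?thesis .
qed

lemma laplace_commute:
  assumes l: "l > \<omega>" and x: "x \<in> DA"
  shows "At (laplace l x) = laplace l (At x)"
proof (rule closed_graph_tendsto(2)[OF At_graph_closed])
  show "laplace_trunc l (real n) x \<in> Dt" for n using laplace_trunc_DA(1) by simp
  show "(\<lambda>n. laplace_trunc l (real n) x) \<longlonglongrightarrow> laplace l x" by (rule laplace_trunc_LIMSEQ[OF l])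
  show "(\<lambda>n. At (laplace_trunc l (real n) x)) \<longlonglongrightarrow> laplace l (At x)"
    using laplace_trunc_LIMSEQ[OF l, of "At x"] by (simp add: laplace_trunc_commute[OF x])
qed

lemma laplace_left_inverse:
  assumes l: "l > \<omega>" and x: "x \<in> DA"
  shows "laplace l (l *\<^sub>R x - At x) = x"
  using laplace_DA(2)[OF l, of x] laplace_commute[OF l x]
  by (simp add: linear_diff[OF laplace_linear[OF l]] linear_scale[OF laplace_linear[OF l]])

lemma laplace_unique: "l > \<omega> \<Longrightarrow> x \<in> DA \<Longrightarrow> l *\<^sub>R x - At x = y \<Longrightarrow> x = laplace l y"
  using laplace_left_inverse by metis

lemma DA_eigen_zero: "l > \<omega> \<Longrightarrow> u \<in> DA \<Longrightarrow> At u = l *\<^sub>R u \<Longrightarrow> u = 0"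
  using laplace_unique[of l u 0] linear_0[OF laplace_linear] by simp

lemma resolvent_eq_laplace:
  assumes l: "l > \<omega>"
  shows "resolvent DA At l y = laplace l y"
  unfolding resolvent_def
proof (rule the_equality)
  show "laplace l y \<in> DA \<and> l *\<^sub>R laplace l y - At (laplace l y) = y" using laplace_DA[OF l] by simp
  show "x = laplace l y" if "x \<in> DA \<and> l *\<^sub>R x - At x = y" for x
    using laplace_unique[OF l] that by blast
qed

lemma laplace_trunc_nonneg: "0 \<le> y \<Longrightarrow> 0 \<le> b \<Longrightarrow> 0 \<le> laplace_trunc l b y"
  unfolding laplace_trunc_def
  by (rule integral_nonneg_banach_lattice[OF _ laplace_integrand_continuous_on])
    (auto intro!: scaleR_nonneg_nonneg T_nonneg)

lemma laplace_nonneg: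
  assumes l: "l > \<omega>" and y: "0 \<le> y"
  shows "0 \<le> laplace l y"
  using closed_sequentially[OF closed_nonneg_cone _ laplace_trunc_LIMSEQ[OF l]]
    laplace_trunc_nonneg[OF y] by simp

lemma DA_dense:
  assumes e: "e > 0"
  obtains x where "x \<in> DA" "0 \<le> y \<Longrightarrow> 0 \<le> x" "norm (y - x) < e"
proof -
  have "\<forall>\<^sub>F s in at_right 0. dist ((1 / s) *\<^sub>R laplace_trunc 0 s y) y < e \<and> 0 < s"
    using tendstoD[OF laplace_trunc_average_0 e] eventually_at_right_less by (rule eventually_conj)
  then obtain s where s: "dist ((1 / s) *\<^sub>R laplace_trunc 0 s y) y < e" "0 < s"
    using eventually_happens[of _ "at_right (0::real)"] by auto
  show ?thesis
  proof
    show "(1 / s) *\<^sub>R laplace_trunc 0 s y \<in> DA" using DA_scale laplace_trunc_DA(1) s(2) by simp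
    show "0 \<le> (1 / s) *\<^sub>R laplace_trunc 0 s y" if "0 \<le> y"
      using laplace_trunc_nonneg[OF that] s(2) by (intro scaleR_nonneg_nonneg) auto
    show "norm (y - (1 / s) *\<^sub>R laplace_trunc 0 s y) < e"
      using s(1) by (simp add: dist_norm norm_minus_commute)
  qed
qed

lemma dirichlet_eqI:
  assumes l: "l > \<omega>" and x: "x \<in> Dt" "At x = l *\<^sub>R x" "G x = v"
  shows "dirichlet Dt At G l v = x"
  unfolding dirichlet_def
proof (rule the_equality)
  show "x \<in> Dt \<and> l *\<^sub>R x - At x = 0 \<and> G x = v" using x by simp
  fix y assume y: "y \<in> Dt \<and> l *\<^sub>R y - At y = 0 \<and> G y = v"
  then have "y - x \<in> DA" using x subspace_diff[OF Dt_subspace] G_diff by simp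
  moreover have "At (y - x) = l *\<^sub>R (y - x)" using x y At_diff[of y x] by (simp add: algebra_simps)
  ultimately show "y = x" using DA_eigen_zero[OF l] by fastforce
qed

lemma dirichlet:
  assumes l: "l > \<omega>"
  shows "dirichlet Dt At G l v \<in> Dt" "At (dirichlet Dt At G l v) = l *\<^sub>R dirichlet Dt At G l v"
    "G (dirichlet Dt At G l v) = v"
proof -
  obtain w where w: "w \<in> Dt" "G w = v" using G_surj by (metis UNIV_I imageE)
  define z where "z = l *\<^sub>R w - At w"
  define x where "x = w - laplace l z"
  have R: "laplace l z \<in> Dt" "G (laplace l z) = 0" "At (laplace l z) = l *\<^sub>R laplace l z - z"
    using laplace_DA[OF l] by auto
  have "x \<in> Dt" using w R subspace_diff[OF Dt_subspace] by (simp add: x_def)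
  moreover have "At x = l *\<^sub>R x"
  proof -
    have "At x = At w - (l *\<^sub>R laplace l z - z)" using At_diff[OF w(1) R(1)] R(3) by (simp add: x_def)
    also have "\<dots> = l *\<^sub>R x" by (simp add: x_def z_def algebra_simps)
    finally show ?thesis .
  qed
  moreover have "G x = v" using w R G_diff by (simp add: x_def)
  ultimately have "dirichlet Dt At G l v = x" by (rule dirichlet_eqI[OF l])
  then show "dirichlet Dt At G l v \<in> Dt" "At (dirichlet Dt At G l v) = l *\<^sub>R dirichlet Dt At G l v"
    "G (dirichlet Dt At G l v) = v" using \<open>x \<in> Dt\<close> \<open>At x = l *\<^sub>R x\<close> \<open>G x = v\<close> by auto
qed

lemma dirichlet_diff:
  assumes l: "l > \<omega>"
  shows "dirichlet Dt At G l (v1 - v2) = dirichlet Dt At G l v1 - dirichlet Dt At G l v2"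
  using dirichlet[OF l, of v1] dirichlet[OF l, of v2]
  by (intro dirichlet_eqI[OF l]) (simp_all add: subspace_diff[OF Dt_subspace] At_diff G_diff algebra_simps)

lemma dirichlet_resolvent_identity:
  assumes l: "l > \<omega>" and m: "m > \<omega>"
  shows "dirichlet Dt At G l v - dirichlet Dt At G m v = (m - l) *\<^sub>R laplace l (dirichlet Dt At G m v)"
proof -
  let ?u = "dirichlet Dt At G l v - dirichlet Dt At G m v"
  note Dl = dirichlet[OF l, of v] and Dm = dirichlet[OF m, of v]
  have "?u \<in> DA" using Dl Dm subspace_diff[OF Dt_subspace] G_diff by simp
  moreover have "At ?u = l *\<^sub>R dirichlet Dt At G l v - m *\<^sub>R dirichlet Dt At G m v"
    using At_diff[OF Dl(1) Dm(1)] Dl(2) Dm(2) by simp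
  then have "l *\<^sub>R ?u - At ?u = (m - l) *\<^sub>R dirichlet Dt At G m v"
    by (simp add: algebra_simps)
  ultimately show ?thesis using laplace_unique[OF l] linear_scale[OF laplace_linear[OF l]] by metis
qed

lemma laplace_boundary_identity:
  assumes l: "l > \<omega>" and z: "z \<in> Dt"
  shows "l *\<^sub>R laplace l z - z = laplace l (At z) - dirichlet Dt At G l (G z)"
proof -
  define a c d where "a = laplace l z" and "c = laplace l (At z)" and "d = dirichlet Dt At G l (G z)"
  have a: "a \<in> Dt" "G a = 0" "At a = l *\<^sub>R a - z" using laplace_DA[OF l] by (auto simp: a_def)
  have c: "c \<in> Dt" "G c = 0" "At c = l *\<^sub>R c - At z" using laplace_DA[OF l] by (auto simp: c_def)
  have d: "d \<in> Dt" "G d = G z" "At d = l *\<^sub>R d" using dirichlet[OF l] by (auto simp: d_def)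
  define u where "u = l *\<^sub>R a - z - c + d"
  have sub: "l *\<^sub>R a \<in> Dt" "l *\<^sub>R a - z \<in> Dt" "l *\<^sub>R a - z - c \<in> Dt"
    using a c z subspace_mul[OF Dt_subspace] subspace_diff[OF Dt_subspace] by auto
  have u: "u \<in> Dt" using subspace_add[OF Dt_subspace sub(3) d(1)] by (simp add: u_def)
  have "G u = 0"
  proof -
    have "G u = G (l *\<^sub>R a - z - c) + G d" unfolding u_def by (rule linear_on_sub_add[OF G_linear sub(3) d(1)])
    also have "G (l *\<^sub>R a - z - c) = G (l *\<^sub>R a - z) - G c" by (rule G_diff[OF sub(2) c(1)])
    also have "G (l *\<^sub>R a - z) = G (l *\<^sub>R a) - G z" by (rule G_diff[OF sub(1) z])
    also have "G (l *\<^sub>R a) = l *\<^sub>R G a" by (rule linear_on_sub_scale[OF G_linear a(1)])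
    finally show ?thesis using a(2) c(2) d(2) by simp
  qed
  moreover have "At u = l *\<^sub>R u"
  proof -
    have "At u = At (l *\<^sub>R a - z - c) + At d" unfolding u_def by (rule linear_on_sub_add[OF At_linear sub(3) d(1)])
    also have "At (l *\<^sub>R a - z - c) = At (l *\<^sub>R a - z) - At c" by (rule At_diff[OF sub(2) c(1)])
    also have "At (l *\<^sub>R a - z) = At (l *\<^sub>R a) - At z" by (rule At_diff[OF sub(1) z])
    also have "At (l *\<^sub>R a) = l *\<^sub>R At a" by (rule linear_on_sub_scale[OF At_linear a(1)])
    finally show ?thesis using a(3) c(3) d(3) by (simp add: u_def algebra_simps)
  qed
  ultimately have "u = 0" using DA_eigen_zero[OF l] u by blast
  then show ?thesis by (simp add: u_def a_def c_def d_def algebra_simps)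
qed

end

section \<open>Positive admissible observations\<close>

lemma nn_integral_Icc_eq_integral:
  fixes f :: "real \<Rightarrow> real"
  assumes "\<And>t. t \<in> {a..b} \<Longrightarrow> 0 \<le> f t" "continuous_on {a..b} f"
  shows "(\<integral>\<^sup>+ t\<in>{a..b}. ennreal (f t) \<partial>lborel) = ennreal (integral {a..b} f)"
proof -
  have "(\<integral>\<^sup>+ t\<in>{a..b}. ennreal (f t) \<partial>lborel) = (\<integral>\<^sup>+ x. ennreal (indicator {a..b} x * f x) \<partial>lborel)"
    by (rule nn_integral_cong) (auto split: split_indicator)
  also have "\<dots> = ennreal (integral {a..b} f)"
    using nn_integral_has_integral_lebesgue[OF assms(1) integrable_integral[OF integrable_continuous_real[OF assms(2)]]] .
  finally show ?thesis .
qed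

lemma le_add_powr:
  fixes u c p :: real
  assumes u: "0 \<le> u" and c: "0 < c" and p: "1 \<le> p"
  shows "u \<le> c + c powr (1 - p) * u powr p"
proof -
  define w where "w = u / c"
  have w: "0 \<le> w" unfolding w_def using u c by simp
  have "w \<le> 1 + w powr p"
  proof (cases "w \<le> 1")
    case False
    then have "w powr 1 \<le> w powr p" using p by (intro powr_mono) auto
    then show ?thesis using w by simp
  qed (simp add: add_increasing2 w)
  then have "c * w \<le> c * (1 + w powr p)" using c by simp
  also have "w powr p = u powr p / c powr p" unfolding w_def by (rule powr_divide)
  also have "c * (1 + u powr p / c powr p) = c + (c powr 1 / c powr p) * u powr p"
    using c by (simp add: field_simps)
  also have "c powr 1 / c powr p = c powr (1 - p)" by (rule powr_diff[symmetric])
  finally show ?thesis using c by (simp add: w_def)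
qed

text \<open>The pointwise bound \<open>u \<le> c + c\<^sup>1\<^sup>-\<^sup>p u\<^sup>p\<close>, used below with \<open>c = \<parallel>x\<parallel>\<close>, turns the
  \<open>L\<^sup>p\<close> admissibility estimate into an \<open>L\<^sup>1\<close> estimate that is linear in \<open>\<parallel>x\<parallel>\<close>.\<close>

lemma integral_le_of_powr_integral_le:
  fixes \<phi> :: "real \<Rightarrow> real"
  assumes \<phi>: "continuous_on {0..\<alpha>} \<phi>" "\<And>t. 0 \<le> \<phi> t" and p: "1 \<le> p" and c: "0 < c" and \<alpha>: "0 \<le> \<alpha>"
    and Lp: "integral {0..\<alpha>} (\<lambda>t. \<phi> t powr p) \<le> \<gamma> powr p * c powr p"
  shows "integral {0..\<alpha>} \<phi> \<le> (\<alpha> + \<gamma> powr p) * c"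
proof -
  have \<phi>p: "continuous_on {0..\<alpha>} (\<lambda>t. \<phi> t powr p)"
    using p \<phi> by (intro continuous_on_powr' continuous_on_const) auto
  have "integral {0..\<alpha>} \<phi> \<le> integral {0..\<alpha>} (\<lambda>t. c + c powr (1 - p) * \<phi> t powr p)"
  proof (rule integral_le)
    show "\<phi> integrable_on {0..\<alpha>}" using integrable_continuous_real[OF \<phi>(1)] .
    show "(\<lambda>t. c + c powr (1 - p) * \<phi> t powr p) integrable_on {0..\<alpha>}"
      by (intro integrable_continuous_real continuous_intros \<phi>p)
    show "\<phi> t \<le> c + c powr (1 - p) * \<phi> t powr p" for t using le_add_powr[OF \<phi>(2) c p] .
  qed
  also have "\<dots> = integral {0..\<alpha>} (\<lambda>t. c) + integral {0..\<alpha>} (\<lambda>t. c powr (1 - p) * \<phi> t powr p)"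
    by (intro Henstock_Kurzweil_Integration.integral_add integrable_continuous_real continuous_intros \<phi>p)
  also have "\<dots> = c * \<alpha> + c powr (1 - p) * integral {0..\<alpha>} (\<lambda>t. \<phi> t powr p)"
    using \<alpha> by simp
  also have "\<dots> \<le> c * \<alpha> + c powr (1 - p) * (\<gamma> powr p * c powr p)"
    using Lp by (intro add_left_mono mult_left_mono) auto
  also have "c powr (1 - p) * (\<gamma> powr p * c powr p) = \<gamma> powr p * c"
    using c by (simp add: powr_add[symmetric])
  finally show ?thesis by (simp add: algebra_simps)
qed

lemma norm_le_pprt_nprt:
  fixes f :: "'a::banach_lattice \<Rightarrow> 'b::real_normed_vector"
  assumes diff: "\<And>a b. f (a - b) = f a - f b"
  shows "norm (f v) \<le> norm (f (pprt v)) + norm (f (- nprt v))"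
  using diff[of "pprt v" "- nprt v"] norm_triangle_ineq4 prts[of v] by (metis diff_minus_eq_add)

lemma nonneg_bound_by_density:
  fixes f :: "'a::banach_lattice \<Rightarrow> 'b::real_normed_vector"
  assumes diff: "\<And>a b. f (a - b) = f a - f b" and bounded: "\<And>y. norm (f y) \<le> C * norm y" "0 \<le> C"
    and K: "0 \<le> K" and S: "\<And>x. x \<in> S \<Longrightarrow> 0 \<le> x \<Longrightarrow> norm (f x) \<le> K * norm x"
    and dense: "\<And>e. e > 0 \<Longrightarrow> \<exists>x\<in>S. 0 \<le> x \<and> norm (y - x) < e"
  shows "norm (f y) \<le> K * norm y"
proof (rule field_le_epsilon)
  fix d :: real assume d: "0 < d"
  define e where "e = d / (C + K + 1)"
  have e: "e > 0" "(C + K) * e \<le> d"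
    using d bounded(2) K by (auto simp: e_def field_simps)
  obtain x where x: "x \<in> S" "0 \<le> x" "norm (y - x) < e" using dense[OF e(1)] by blast
  have "norm (f y) \<le> norm (f (y - x)) + norm (f x)"
    using diff[of y x] norm_triangle_ineq4[of "f y" "f x"] by (metis diff_add_cancel norm_triangle_ineq)
  also have "\<dots> \<le> C * e + K * (norm y + e)"
  proof (intro add_mono)
    show "norm (f (y - x)) \<le> C * e"
      using bounded(1)[of "y - x"] x(3) bounded(2) by (meson less_imp_le mult_left_mono order_trans)
    have "norm x \<le> norm y + e" using x(3) norm_triangle_ineq3[of y x] by (simp add: norm_minus_commute)
    then show "norm (f x) \<le> K * (norm y + e)"
      using S[OF x(1,2)] K by (meson mult_left_mono order_trans)
  qed
  also have "\<dots> \<le> K * norm y + d" using e(2) by (simp add: algebra_simps)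
  finally show "norm (f y) \<le> K * norm y + d" .
qed

lemma tendsto_zero_by_density:
  fixes A :: "nat \<Rightarrow> 'a::real_normed_vector \<Rightarrow> 'b::real_normed_vector"
  assumes diff: "\<And>n a b. n \<ge> N \<Longrightarrow> A n (a - b) = A n a - A n b"
    and bounded: "\<And>n z. n \<ge> N \<Longrightarrow> norm (A n z) \<le> K * norm z" "0 \<le> K"
    and S: "\<And>x. x \<in> S \<Longrightarrow> (\<lambda>n. A n x) \<longlonglongrightarrow> 0"
    and dense: "\<And>e. e > 0 \<Longrightarrow> \<exists>x\<in>S. norm (y - x) < e"
  shows "(\<lambda>n. A n y) \<longlonglongrightarrow> 0"
proof (rule LIMSEQ_I)
  fix r :: real assume r: "0 < r"
  define e where "e = r / (2 * (K + 1))"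
  have e: "e > 0" "K * e < r / 2" using r bounded(2) by (auto simp: e_def field_simps)
  obtain x where x: "x \<in> S" "norm (y - x) < e" using dense[OF e(1)] by blast
  obtain N1 where N1: "\<And>n. n \<ge> N1 \<Longrightarrow> norm (A n x) < r / 2"
    using LIMSEQ_D[OF S[OF x(1)], of "r / 2"] r by auto
  have small: "norm (A n y) < r" if n: "n \<ge> max N N1" for n
  proof -
    have "norm (A n y) \<le> norm (A n (y - x)) + norm (A n x)"
      using diff[of n y x] n norm_triangle_ineq4[of "A n y" "A n x"] by (metis diff_add_cancel max.boundedE norm_triangle_ineq)
    also have "norm (A n (y - x)) \<le> K * e"
      using bounded(1)[of n "y - x"] n x(2) bounded(2) by (meson less_imp_le max.boundedE mult_left_mono order_trans)
    finally show ?thesis using N1[of n] n e(2) by linarith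
  qed
  then show "\<exists>no. \<forall>n\<ge>no. norm (A n y - 0) < r" using small by (intro exI[of _ "max N N1"]) simp
qed

locale positive_observation = boundary_semigroup At Dt G T M \<omega>
  for At :: "'x::banach_lattice \<Rightarrow> 'x" and Dt and G :: "'x \<Rightarrow> 'v::banach_lattice" and T M \<omega> +
  fixes Gam :: "'x \<Rightarrow> 'v" and \<alpha> \<gamma> p :: real
  assumes Gam_bdd: "graph_bounded Dt At Gam"
    and Gam_nonneg: "\<And>x. x \<in> Dt \<Longrightarrow> 0 \<le> x \<Longrightarrow> 0 \<le> Gam x"
    and p: "1 \<le> p" and \<alpha>: "\<alpha> > 0"
    and admissible: "\<And>x. x \<in> DA \<Longrightarrow> 0 \<le> x \<Longrightarrow>
        (\<integral>\<^sup>+ t\<in>{0..\<alpha>}. ennreal (norm (Gam (T t x)) powr p) \<partial>lborel) \<le> ennreal (\<gamma> powr p * norm x powr p)"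
begin

abbreviation "adm_const \<equiv> \<alpha> + \<gamma> powr p"

lemma adm_const_nonneg: "0 \<le> adm_const"
  using \<alpha> by simp

lemma Gam_linear: "linear_on_sub Dt Gam"
  using Gam_bdd unfolding graph_bounded_def by blast

lemma Gam_diff: "x \<in> Dt \<Longrightarrow> y \<in> Dt \<Longrightarrow> Gam (x - y) = Gam x - Gam y"
  using linear_on_sub_diff[OF Gam_linear] .

lemma Gam_T_continuous_on:
  assumes x: "x \<in> DA" and S: "S \<subseteq> {0..}"
  shows "continuous_on S (\<lambda>t. Gam (T t x))"
proof (rule graph_bounded_continuous_on[OF At_linear Gam_bdd T_continuous_on[OF S]])
  show "continuous_on S (\<lambda>t. At (T t x))"
    by (rule continuous_on_eq[OF T_continuous_on[OF S, of "At x"]]) (use T_DA[OF x] S in auto)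
  show "T t x \<in> Dt" if "t \<in> S" for t using T_DA[OF x] S that by auto
qed

lemma admissible_L1_bound:
  assumes x: "x \<in> DA" and x_nonneg: "0 \<le> x"
  shows "integral {0..\<alpha>} (\<lambda>t. norm (Gam (T t x))) \<le> adm_const * norm x"
proof (cases "x = 0")
  case True
  then have "Gam (T t x) = 0" if "0 \<le> t" for t
    using linear_0[OF bounded_linear.linear[OF T_linear[OF that]]] linear_on_sub_zero[OF Gam_linear] by simp
  then have "integral {0..\<alpha>} (\<lambda>t. norm (Gam (T t x))) = integral {0..\<alpha>} (\<lambda>t. 0)"
    by (intro integral_cong) auto
  then show ?thesis using True by simp
next
  case False
  define \<phi> where "\<phi> t = norm (Gam (T t x))" for t
  have \<phi>: "continuous_on {0..\<alpha>} \<phi>"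
    unfolding \<phi>_def by (intro continuous_on_norm Gam_T_continuous_on[OF x]) auto
  have "ennreal (integral {0..\<alpha>} (\<lambda>t. \<phi> t powr p)) = (\<integral>\<^sup>+ t\<in>{0..\<alpha>}. ennreal (\<phi> t powr p) \<partial>lborel)"
    using p by (intro nn_integral_Icc_eq_integral[symmetric] continuous_on_powr' \<phi> continuous_on_const)
      (auto simp: \<phi>_def)
  also have "\<dots> \<le> ennreal (\<gamma> powr p * norm x powr p)"
    using admissible[OF x x_nonneg] by (simp add: \<phi>_def)
  finally have Lp: "integral {0..\<alpha>} (\<lambda>t. \<phi> t powr p) \<le> \<gamma> powr p * norm x powr p"
    by (subst (asm) ennreal_le_iff) auto
  have "integral {0..\<alpha>} \<phi> \<le> adm_const * norm x"
    by (rule integral_le_of_powr_integral_le[OF \<phi> _ p _ less_imp_le[OF \<alpha>] Lp]) (use False in \<open>auto simp: \<phi>_def\<close>)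
  then show ?thesis by (simp add: \<phi>_def[abs_def])
qed

end

lemma linear_on_sub_Pair:
  assumes f: "linear_on_sub S f" and g: "linear_on_sub S g"
  shows "linear_on_sub S (\<lambda>x. (f x, g x))"
  using assms unfolding linear_on_sub_def by simp

lemma graph_bounded_LIMSEQ:
  assumes Op: "linear_on_sub Dom Op" and F: "graph_bounded Dom Op F"
    and xs: "\<And>n. xs n \<in> Dom" "x \<in> Dom" and lim: "xs \<longlonglongrightarrow> x" "(\<lambda>n. Op (xs n)) \<longlonglongrightarrow> Op x"
  shows "(\<lambda>n. F (xs n)) \<longlonglongrightarrow> F x"
proof -
  obtain C where C: "C \<ge> 0"
    "\<And>x y. x \<in> Dom \<Longrightarrow> y \<in> Dom \<Longrightarrow> norm (F x - F y) \<le> C * (norm (x - y) + norm (Op x - Op y))"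
    using graph_bounded_diff_le[OF Op F] by blast
  have "(\<lambda>n. C * (norm (xs n - x) + norm (Op (xs n) - Op x))) \<longlonglongrightarrow> C * (0 + 0)"
    using lim by (intro tendsto_intros tendsto_norm_zero LIM_zero)
  moreover have "\<forall>n. norm (F (xs n) - F x) \<le> C * (norm (xs n - x) + norm (Op (xs n) - Op x))"
    using C(2) xs by blast
  ultimately have "(\<lambda>n. F (xs n) - F x) \<longlonglongrightarrow> 0"
    using Lim_null_comparison[OF always_eventually] by fastforce
  then show ?thesis by (rule LIM_zero_cancel)
qed

context positive_observation
begin

definition weighted_obs :: "real \<Rightarrow> 'x \<Rightarrow> real \<Rightarrow> real" where
  "weighted_obs l x b = integral {0..b} (\<lambda>t. exp (- l * t) * norm (Gam (T t x)))"

lemma weighted_obs_integrable: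
  "x \<in> DA \<Longrightarrow> 0 \<le> a \<Longrightarrow> (\<lambda>t. exp (- l * t) * norm (Gam (T t x))) integrable_on {a..b}"
  by (intro integrable_continuous_real continuous_intros continuous_on_norm Gam_T_continuous_on) auto

lemma weighted_obs_mono:
  assumes x: "x \<in> DA" and b: "0 \<le> b" "b \<le> c"
  shows "weighted_obs l x b \<le> weighted_obs l x c"
proof -
  have "weighted_obs l x c = weighted_obs l x b + integral {b..c} (\<lambda>t. exp (- l * t) * norm (Gam (T t x)))"
    unfolding weighted_obs_def
    using Henstock_Kurzweil_Integration.integral_combine[OF b weighted_obs_integrable[OF x order_refl]] by simp
  moreover have "0 \<le> integral {b..c} (\<lambda>t. exp (- l * t) * norm (Gam (T t x)))"
    by (rule integral_nonneg[OF weighted_obs_integrable[OF x b(1)]]) simp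
  ultimately show ?thesis by simp
qed

lemma weighted_obs_first_le:
  assumes l: "0 \<le> l" and x: "x \<in> DA" and x_nonneg: "0 \<le> x"
  shows "weighted_obs l x \<alpha> \<le> adm_const * norm x"
proof -
  have "weighted_obs l x \<alpha> \<le> integral {0..\<alpha>} (\<lambda>t. norm (Gam (T t x)))"
    unfolding weighted_obs_def
  proof (rule integral_le[OF weighted_obs_integrable[OF x order_refl]])
    show "(\<lambda>t. norm (Gam (T t x))) integrable_on {0..\<alpha>}"
      by (intro integrable_continuous_real continuous_on_norm Gam_T_continuous_on[OF x]) auto
    show "exp (- l * t) * norm (Gam (T t x)) \<le> norm (Gam (T t x))" if "t \<in> {0..\<alpha>}" for t
      using that l by (intro mult_left_le_one_le) auto
  qed
  also have "\<dots> \<le> adm_const * norm x" by (rule admissible_L1_bound[OF x x_nonneg])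
  finally show ?thesis .
qed

lemma weighted_obs_step:
  assumes x: "x \<in> DA"
  shows "weighted_obs l x (real (Suc N) * \<alpha>) = weighted_obs l x \<alpha> + exp (- l * \<alpha>) * weighted_obs l (T \<alpha> x) (real N * \<alpha>)"
proof -
  let ?h = "\<lambda>t. exp (- l * t) * norm (Gam (T t x))"
  have N: "0 \<le> real N * \<alpha>" "real (Suc N) * \<alpha> = \<alpha> + real N * \<alpha>" using \<alpha> by (auto simp: algebra_simps)
  have "weighted_obs l x (real (Suc N) * \<alpha>) = weighted_obs l x \<alpha> + integral {\<alpha>..\<alpha> + real N * \<alpha>} ?h"
    unfolding weighted_obs_def N(2)
    using Henstock_Kurzweil_Integration.integral_combine[OF _ _ weighted_obs_integrable[OF x order_refl]] \<alpha> N(1)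
    by simp
  also have "integral {\<alpha>..\<alpha> + real N * \<alpha>} ?h = integral {0..real N * \<alpha>} (?h \<circ> (+) \<alpha>)"
    using integral_shift_Icc_real[of 0 "real N * \<alpha>" ?h \<alpha>] by (simp add: add.commute)
  also have "\<dots> = exp (- l * \<alpha>) * weighted_obs l (T \<alpha> x) (real N * \<alpha>)"
    unfolding weighted_obs_def integral_mult_right[symmetric]
    using \<alpha> by (intro integral_cong) (simp add: T_add[symmetric] exp_add[symmetric] algebra_simps)
  finally show ?thesis .
qed

text \<open>The geometric factor \<open>M e\<^sup>(\<^sup>\<omega>\<^sup>-\<^sup>l\<^sup>)\<^sup>\<alpha> \<le> 1/2\<close> makes the contributions of successive
  intervals of length \<open>\<alpha>\<close> sum to at most twice the first one.\<close>

lemma weighted_obs_bound: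
  assumes l: "0 \<le> l" and q: "M * exp ((\<omega> - l) * \<alpha>) \<le> 1 / 2"
  shows "x \<in> DA \<Longrightarrow> 0 \<le> x \<Longrightarrow> weighted_obs l x (real N * \<alpha>) \<le> 2 * adm_const * norm x"
proof (induction N arbitrary: x)
  case 0
  then show ?case using adm_const_nonneg by (simp add: weighted_obs_def)
next
  case (Suc N)
  have Tx: "T \<alpha> x \<in> DA" "0 \<le> T \<alpha> x" using T_DA[OF Suc.prems(1)] T_nonneg Suc.prems(2) \<alpha> by auto
  have "weighted_obs l x (real (Suc N) * \<alpha>) = weighted_obs l x \<alpha> + exp (- l * \<alpha>) * weighted_obs l (T \<alpha> x) (real N * \<alpha>)"
    by (rule weighted_obs_step[OF Suc.prems(1)])
  also have "\<dots> \<le> adm_const * norm x + exp (- l * \<alpha>) * (2 * adm_const * (M * exp (\<omega> * \<alpha>) * norm x))"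
  proof -
    have "2 * adm_const * norm (T \<alpha> x) \<le> 2 * adm_const * (M * exp (\<omega> * \<alpha>) * norm x)"
      using T_bound[of \<alpha> x] \<alpha> adm_const_nonneg by (intro mult_left_mono) auto
    then have "weighted_obs l (T \<alpha> x) (real N * \<alpha>) \<le> 2 * adm_const * (M * exp (\<omega> * \<alpha>) * norm x)"
      by (rule order_trans[OF Suc.IH[OF Tx]])
    then show ?thesis using weighted_obs_first_le[OF l Suc.prems] by (intro add_mono mult_left_mono) auto
  qed
  also have "\<dots> = adm_const * norm x + 2 * adm_const * norm x * (M * exp ((\<omega> - l) * \<alpha>))"
    by (simp add: algebra_simps exp_add[symmetric])
  also have "\<dots> \<le> adm_const * norm x + 2 * adm_const * norm x * (1 / 2)"
    using q adm_const_nonneg by (intro add_left_mono mult_left_mono) auto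
  also have "\<dots> = 2 * adm_const * norm x" by (simp add: algebra_simps)
  finally show ?case .
qed

lemma At_laplace_integrand:
  "x \<in> DA \<Longrightarrow> 0 \<le> t \<Longrightarrow> At (exp (- l * t) *\<^sub>R T t x) = exp (- l * t) *\<^sub>R T t (At x)"
  using linear_on_sub_scale[OF At_linear] T_DA by auto

lemma Gam_laplace_trunc:
  assumes x: "x \<in> DA" and b: "0 \<le> b"
  shows "Gam (laplace_trunc l b x) = integral {0..b} (\<lambda>t. exp (- l * t) *\<^sub>R Gam (T t x))"
proof -
  let ?E = "\<lambda>t. exp (- l * t) *\<^sub>R T t x"
  have E: "?E t \<in> Dt" if "t \<in> {0..b}" for t using T_DA(1)[OF x] that subspace_mul[OF Dt_subspace] by auto
  have Gam_E: "Gam (?E t) = exp (- l * t) *\<^sub>R Gam (T t x)" if "t \<in> {0..b}" for t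
    using linear_on_sub_scale[OF Gam_linear] T_DA(1)[OF x] that by auto
  have "continuous_on {0..b} (\<lambda>t. At (?E t))"
    by (rule continuous_on_eq[OF laplace_integrand_continuous_on[of "{0..b}" l "At x"]])
      (use At_laplace_integrand[OF x] in auto)
  moreover have "continuous_on {0..b} (\<lambda>t. exp (- l * t) *\<^sub>R Gam (T t x))"
    by (intro continuous_intros Gam_T_continuous_on[OF x]) auto
  then have "continuous_on {0..b} (\<lambda>t. Gam (?E t))"
    by (rule continuous_on_eq) (use Gam_E in auto)
  ultimately have cont: "continuous_on {0..b} (\<lambda>t. (At (?E t), Gam (?E t)))" by (rule continuous_on_Pair)
  have "(At (integral {0..b} ?E), Gam (integral {0..b} ?E)) = integral {0..b} (\<lambda>t. (At (?E t), Gam (?E t)))"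
  proof (rule integral_closed_graph(2)[OF linear_on_sub_Pair[OF At_linear Gam_linear]
        closed_graph_pair[OF At_linear At_graph_closed Gam_bdd] b _ cont])
    show "continuous_on {0..b} ?E" by (rule laplace_integrand_continuous_on) auto
  qed (use E in auto)
  then have "Gam (integral {0..b} ?E) = snd (integral {0..b} (\<lambda>t. (At (?E t), Gam (?E t))))"
    by (metis snd_conv)
  also have "\<dots> = integral {0..b} (\<lambda>t. Gam (?E t))"
    using integral_linear[OF integrable_continuous_real[OF cont] bounded_linear_snd] by (simp add: o_def)
  also have "\<dots> = integral {0..b} (\<lambda>t. exp (- l * t) *\<^sub>R Gam (T t x))"
    by (rule integral_cong) (rule Gam_E)
  finally show ?thesis unfolding laplace_trunc_def .
qed

end

context positive_observation
begin

lemma norm_Gam_laplace_trunc_le: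
  assumes x: "x \<in> DA" and b: "0 \<le> b"
  shows "norm (Gam (laplace_trunc l b x)) \<le> weighted_obs l x b"
  unfolding Gam_laplace_trunc[OF x b] weighted_obs_def
proof (rule integral_norm_bound_integral)
  show "(\<lambda>t. exp (- l * t) *\<^sub>R Gam (T t x)) integrable_on {0..b}"
    by (intro integrable_continuous_real continuous_intros Gam_T_continuous_on[OF x]) auto
  show "(\<lambda>t. exp (- l * t) * norm (Gam (T t x))) integrable_on {0..b}"
    by (rule weighted_obs_integrable[OF x order_refl])
qed simp

lemma laplace_Dt: "l > \<omega> \<Longrightarrow> laplace l y \<in> Dt"
  using laplace_DA(1) by simp

lemma Gam_laplace_diff:
  assumes l: "l > \<omega>"
  shows "Gam (laplace l (a - b)) = Gam (laplace l a) - Gam (laplace l b)"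
  using Gam_diff laplace_DA(1)[OF l] linear_diff[OF laplace_linear[OF l]] by simp

lemma Gam_laplace_bounded:
  assumes l: "l > \<omega>"
  obtains C where "C \<ge> 0" "\<And>y. norm (Gam (laplace l y)) \<le> C * norm y"
proof -
  obtain C where C: "C \<ge> 0" "\<And>x. x \<in> Dt \<Longrightarrow> norm (Gam x) \<le> C * (norm x + norm (At x))"
    using graph_bounded_le[OF Gam_bdd] by blast
  have "norm (Gam (laplace l y)) \<le> (C * ((1 + l) * (M / (l - \<omega>)) + 1)) * norm y" for y
  proof -
    have R: "norm (laplace l y) \<le> M / (l - \<omega>) * norm y" using laplace_norm_le[OF l, of y] by simp
    have "norm (Gam (laplace l y)) \<le> C * (norm (laplace l y) + norm (l *\<^sub>R laplace l y - y))"
      using C(2)[OF laplace_Dt[OF l]] laplace_DA(2)[OF l] by simp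
    also have "\<dots> \<le> C * ((1 + l) * norm (laplace l y) + norm y)"
      using C(1) l \<omega> norm_triangle_ineq4[of "l *\<^sub>R laplace l y" y]
      by (intro mult_left_mono) (auto simp: algebra_simps)
    also have "\<dots> \<le> C * ((1 + l) * (M / (l - \<omega>) * norm y) + norm y)"
      using C(1) l \<omega> R by (intro mult_left_mono add_right_mono) auto
    finally show ?thesis by (simp add: algebra_simps)
  qed
  moreover have "C * ((1 + l) * (M / (l - \<omega>)) + 1) \<ge> 0" using C(1) l \<omega> M by simp
  ultimately show ?thesis using that by blast
qed

lemma halving_threshold:
  obtains L where "\<And>l. l \<ge> L \<Longrightarrow> l > \<omega>" "\<And>l. l \<ge> L \<Longrightarrow> M * exp ((\<omega> - l) * \<alpha>) \<le> 1 / 2"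
proof
  define L where "L = \<omega> + ln (2 * M) / \<alpha> + 1"
  have ln: "ln (2 * M) > 0" using M by simp
  show "l > \<omega>" if "l \<ge> L" for l using that ln \<alpha> by (simp add: L_def) (smt (verit) divide_pos_pos)
  show "M * exp ((\<omega> - l) * \<alpha>) \<le> 1 / 2" if "l \<ge> L" for l
  proof -
    have "(\<omega> - l) * \<alpha> \<le> - (ln (2 * M) / \<alpha>) * \<alpha>"
      using that \<alpha> ln by (intro mult_right_mono) (auto simp: L_def)
    then have "exp ((\<omega> - l) * \<alpha>) \<le> exp (- ln (2 * M))" using \<alpha> by simp
    also have "\<dots> = 1 / (2 * M)" using M by (simp add: exp_minus inverse_eq_divide)
    finally show ?thesis using M by (simp add: field_simps)
  qed
qed

lemma Gam_laplace_nonneg_DA_le: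
  assumes l: "l > \<omega>" and q: "M * exp ((\<omega> - l) * \<alpha>) \<le> 1 / 2" and x: "x \<in> DA" "0 \<le> x"
  shows "norm (Gam (laplace l x)) \<le> 2 * adm_const * norm x"
proof (rule tendsto_le[OF trivial_limit_sequentially tendsto_const])
  show "(\<lambda>n. norm (Gam (laplace_trunc l (real n) x))) \<longlonglongrightarrow> norm (Gam (laplace l x))"
  proof (intro tendsto_norm graph_bounded_LIMSEQ[OF At_linear Gam_bdd])
    show "laplace_trunc l (real n) x \<in> Dt" for n using laplace_trunc_DA(1) by simp
    show "laplace l x \<in> Dt" using laplace_DA(1)[OF l] by simp
    show "(\<lambda>n. laplace_trunc l (real n) x) \<longlonglongrightarrow> laplace l x" by (rule laplace_trunc_LIMSEQ[OF l])
    show "(\<lambda>n. At (laplace_trunc l (real n) x)) \<longlonglongrightarrow> At (laplace l x)"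
      using laplace_trunc_LIMSEQ[OF l, of "At x"] by (simp add: laplace_trunc_commute[OF x(1)] laplace_commute[OF l x(1)])
  qed
  have "norm (Gam (laplace_trunc l (real n) x)) \<le> 2 * adm_const * norm x" for n
  proof -
    obtain N :: nat where N: "real n / \<alpha> \<le> real N" using real_arch_simple by blast
    have "norm (Gam (laplace_trunc l (real n) x)) \<le> weighted_obs l x (real n)"
      by (rule norm_Gam_laplace_trunc_le[OF x(1)]) simp
    also have "\<dots> \<le> weighted_obs l x (real N * \<alpha>)"
      using N \<alpha> by (intro weighted_obs_mono[OF x(1)]) (auto simp: field_simps)
    also have "\<dots> \<le> 2 * adm_const * norm x" using weighted_obs_bound[OF _ q x] l \<omega> by simp
    finally show ?thesis .
  qed
  then show "\<forall>\<^sub>F n in sequentially. norm (Gam (laplace_trunc l (real n) x)) \<le> 2 * adm_const * norm x" by simp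
qed

lemma Gam_laplace_le:
  assumes l: "l > \<omega>" and q: "M * exp ((\<omega> - l) * \<alpha>) \<le> 1 / 2"
  shows "norm (Gam (laplace l y)) \<le> 4 * adm_const * norm y"
proof -
  obtain C where C: "C \<ge> 0" "\<And>y. norm (Gam (laplace l y)) \<le> C * norm y"
    using Gam_laplace_bounded[OF l] by blast
  have nonneg: "norm (Gam (laplace l y)) \<le> 2 * adm_const * norm y" if "0 \<le> y" for y
  proof (rule nonneg_bound_by_density[OF Gam_laplace_diff[OF l] C(2,1)])
    show "0 \<le> 2 * adm_const" using adm_const_nonneg by simp
    show "norm (Gam (laplace l x)) \<le> 2 * adm_const * norm x" if "x \<in> DA" "0 \<le> x" for x
      using Gam_laplace_nonneg_DA_le[OF l q that] .
    show "\<exists>x\<in>DA. 0 \<le> x \<and> norm (y - x) < e" if "e > 0" for e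
      using DA_dense[OF that, of y] \<open>0 \<le> y\<close> by metis
  qed
  have "norm (Gam (laplace l y)) \<le> norm (Gam (laplace l (pprt y))) + norm (Gam (laplace l (- nprt y)))"
    by (rule norm_le_pprt_nprt[OF Gam_laplace_diff[OF l]])
  also have "\<dots> \<le> 2 * adm_const * norm y + 2 * adm_const * norm y"
  proof (intro add_mono)
    have K: "0 \<le> 2 * adm_const" using adm_const_nonneg by simp
    show "norm (Gam (laplace l (pprt y))) \<le> 2 * adm_const * norm y"
      using order_trans[OF nonneg[of "pprt y"] mult_left_mono[OF norm_pprt_le K]] by simp
    show "norm (Gam (laplace l (- nprt y))) \<le> 2 * adm_const * norm y"
      using order_trans[OF nonneg[of "- nprt y", unfolded norm_minus_cancel] mult_left_mono[OF norm_nprt_le K]]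
      by simp
  qed
  finally show ?thesis by (simp add: algebra_simps)
qed

lemma Gam_laplace_DA_tendsto:
  assumes w: "w \<in> DA"
  shows "(\<lambda>n. Gam (laplace (real n) w)) \<longlonglongrightarrow> 0"
proof -
  obtain C where C: "C \<ge> 0" "\<And>x. x \<in> Dt \<Longrightarrow> norm (Gam x) \<le> C * (norm x + norm (At x))"
    using graph_bounded_le[OF Gam_bdd] by blast
  obtain N :: nat where N: "\<omega> < real N" using reals_Archimedean2 by blast
  have bound: "norm (Gam (laplace (real n) w)) \<le> C * M * (norm w + norm (At w)) / (real n - \<omega>)"
    if "n \<ge> N" for n
  proof -
    have l: "real n > \<omega>" using N that by linarith
    have "norm (Gam (laplace (real n) w)) \<le> C * (norm (laplace (real n) w) + norm (laplace (real n) (At w)))"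
      using C(2)[OF laplace_Dt[OF l, of w]] laplace_commute[OF l w] by simp
    also have "\<dots> \<le> C * (M * norm w / (real n - \<omega>) + M * norm (At w) / (real n - \<omega>))"
      using laplace_norm_le[OF l] C(1) by (intro mult_left_mono add_mono) auto
    finally show ?thesis by (simp add: add_divide_distrib ring_distribs)
  qed
  have "filterlim (\<lambda>n. - \<omega> + real n) at_top sequentially"
    by (rule filterlim_tendsto_add_at_top[OF tendsto_const filterlim_real_sequentially])
  then have "(\<lambda>n. C * M * (norm w + norm (At w)) / (real n - \<omega>)) \<longlonglongrightarrow> 0"
    by (intro tendsto_divide_0[OF tendsto_const] filterlim_at_top_imp_at_infinity) simp
  moreover have "\<forall>\<^sub>F n in sequentially. norm (Gam (laplace (real n) w)) \<le> C * M * (norm w + norm (At w)) / (real n - \<omega>)"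
    using bound by (rule eventually_sequentiallyI)
  ultimately show ?thesis using Lim_null_comparison by fastforce
qed

lemma Gam_laplace_tendsto: "(\<lambda>n. Gam (laplace (real n) y)) \<longlonglongrightarrow> 0"
proof -
  obtain L where L: "\<And>l. l \<ge> L \<Longrightarrow> l > \<omega>" "\<And>l. l \<ge> L \<Longrightarrow> M * exp ((\<omega> - l) * \<alpha>) \<le> 1 / 2"
    using halving_threshold by blast
  obtain N :: nat where N: "L \<le> real N" using real_arch_simple by blast
  show ?thesis
  proof (rule tendsto_zero_by_density[where N = N and K = "4 * adm_const" and S = DA])
    show "Gam (laplace (real n) (a - b)) = Gam (laplace (real n) a) - Gam (laplace (real n) b)" if "n \<ge> N" for n a b
      using Gam_laplace_diff L(1) N that by simp
    show "norm (Gam (laplace (real n) z)) \<le> 4 * adm_const * norm z" if "n \<ge> N" for n z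
      using Gam_laplace_le L N that by simp
    show "\<exists>x\<in>DA. norm (y - x) < e" if "e > 0" for e using DA_dense[OF that] by metis
  qed (use adm_const_nonneg Gam_laplace_DA_tendsto in auto)
qed

end

section \<open>Convergence of \<open>\<Gamma> D\<^sub>n\<close> and \<open>\<Gamma>\<^sub>n\<close>\<close>

locale dirichlet_observation = positive_observation At Dt G T M \<omega> Gam \<alpha> \<gamma> p
  for At :: "'x::banach_lattice \<Rightarrow> 'x" and Dt and G :: "'x \<Rightarrow> 'v::banach_lattice" and T M \<omega> Gam \<alpha> \<gamma> p +
  assumes dirichlet_eventually_nonneg: "\<exists>L. \<forall>l\<ge>L. \<forall>v. 0 \<le> v \<longrightarrow> 0 \<le> dirichlet Dt At G l v"
    and Gam_dirichlet_weakly_null: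
      "\<And>u v. bounded_linear (u :: 'v \<Rightarrow> real) \<Longrightarrow> ((\<lambda>l. u (Gam (dirichlet Dt At G l v))) \<longlongrightarrow> 0) at_top"
begin

lemma Gam_dirichlet_nonneg_tendsto:
  assumes v: "0 \<le> v"
  shows "(\<lambda>n. norm (Gam (dirichlet Dt At G (real n) v))) \<longlonglongrightarrow> 0"
proof -
  obtain L where L: "\<And>l v. l \<ge> L \<Longrightarrow> 0 \<le> v \<Longrightarrow> 0 \<le> dirichlet Dt At G l v"
    using dirichlet_eventually_nonneg by blast
  obtain N :: nat where N: "max L \<omega> + 1 < real N" using reals_Archimedean2 by blast
  define xs where "xs k = Gam (dirichlet Dt At G (real (k + N)) v)" for k
  have big: "real (k + N) > \<omega>" "real (k + N) \<ge> L" for k using N by auto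
  have "0 \<le> xs k" for k
    unfolding xs_def using Gam_nonneg dirichlet(1)[OF big(1)] L[OF big(2) v] by blast
  moreover have "xs (Suc k) \<le> xs k" for k
  proof -
    let ?l = "real (k + N)" and ?m = "real (Suc k + N)"
    have "dirichlet Dt At G ?l v - dirichlet Dt At G ?m v = laplace ?l (dirichlet Dt At G ?m v)"
      using dirichlet_resolvent_identity[OF big(1)[of k] big(1)[of "Suc k"], of v] by simp
    moreover have "0 \<le> laplace ?l (dirichlet Dt At G ?m v)"
      using laplace_nonneg[OF big(1)[of k] L[OF big(2)[of "Suc k"] v]] .
    ultimately have "0 \<le> Gam (dirichlet Dt At G ?l v - dirichlet Dt At G ?m v)"
      using Gam_nonneg laplace_Dt[OF big(1)[of k]] by metis
    then show ?thesis
      using Gam_diff[OF dirichlet(1)[OF big(1)[of k]] dirichlet(1)[OF big(1)[of "Suc k"]]] by (simp add: xs_def)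
  qed
  moreover have "(\<lambda>k. u (xs k)) \<longlonglongrightarrow> 0" if u: "bounded_linear (u :: 'v \<Rightarrow> real)" for u
    using filterlim_compose[OF Gam_dirichlet_weakly_null[OF u] filterlim_real_sequentially]
    unfolding xs_def by (rule LIMSEQ_ignore_initial_segment)
  ultimately have "(\<lambda>k. norm (xs k)) \<longlonglongrightarrow> 0" by (rule antimono_weakly_null_imp_norm_null)
  then show ?thesis unfolding xs_def by (rule LIMSEQ_offset)
qed

lemma Gam_dirichlet_tendsto: "(\<lambda>n. norm (Gam (dirichlet Dt At G (real n) v))) \<longlonglongrightarrow> 0"
proof (rule Lim_null_comparison)
  obtain N :: nat where N: "\<omega> < real N" using reals_Archimedean2 by blast
  have "norm (Gam (dirichlet Dt At G (real n) v))
      \<le> norm (Gam (dirichlet Dt At G (real n) (pprt v))) + norm (Gam (dirichlet Dt At G (real n) (- nprt v)))"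
    if "n \<ge> N" for n
  proof (rule norm_le_pprt_nprt)
    have l: "real n > \<omega>" using N that by linarith
    show "Gam (dirichlet Dt At G (real n) (a - b)) = Gam (dirichlet Dt At G (real n) a) - Gam (dirichlet Dt At G (real n) b)"
      for a b using dirichlet_diff[OF l] Gam_diff dirichlet(1)[OF l] by simp
  qed
  then show "\<forall>\<^sub>F n in sequentially. norm (norm (Gam (dirichlet Dt At G (real n) v)))
      \<le> norm (Gam (dirichlet Dt At G (real n) (pprt v))) + norm (Gam (dirichlet Dt At G (real n) (- nprt v)))"
    by (auto intro: eventually_sequentiallyI)
  show "(\<lambda>n. norm (Gam (dirichlet Dt At G (real n) (pprt v))) + norm (Gam (dirichlet Dt At G (real n) (- nprt v))))
      \<longlonglongrightarrow> 0"
    using tendsto_add[OF Gam_dirichlet_nonneg_tendsto Gam_dirichlet_nonneg_tendsto] by simp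
qed

lemma Gam_resolvent_tendsto:
  assumes z: "z \<in> Dt"
  shows "(\<lambda>n. norm (Gam (real n *\<^sub>R resolvent DA At (real n) z) - Gam z)) \<longlonglongrightarrow> 0"
proof (rule Lim_null_comparison)
  obtain N :: nat where N: "\<omega> < real N" using reals_Archimedean2 by blast
  have "norm (Gam (real n *\<^sub>R resolvent DA At (real n) z) - Gam z)
      \<le> norm (Gam (laplace (real n) (At z))) + norm (Gam (dirichlet Dt At G (real n) (G z)))"
    if "n \<ge> N" for n
  proof -
    have l: "real n > \<omega>" using N that by linarith
    have "Gam (real n *\<^sub>R resolvent DA At (real n) z) - Gam z = Gam (real n *\<^sub>R laplace (real n) z - z)"
      using Gam_diff[OF subspace_mul[OF Dt_subspace laplace_Dt[OF l]] z] by (simp add: resolvent_eq_laplace[OF l])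
    also have "\<dots> = Gam (laplace (real n) (At z)) - Gam (dirichlet Dt At G (real n) (G z))"
      using laplace_boundary_identity[OF l z] Gam_diff[OF laplace_Dt[OF l] dirichlet(1)[OF l]] by simp
    finally show ?thesis by (simp add: norm_triangle_ineq4)
  qed
  then show "\<forall>\<^sub>F n in sequentially. norm (norm (Gam (real n *\<^sub>R resolvent DA At (real n) z) - Gam z))
      \<le> norm (Gam (laplace (real n) (At z))) + norm (Gam (dirichlet Dt At G (real n) (G z)))"
    by (auto intro: eventually_sequentiallyI)
  show "(\<lambda>n. norm (Gam (laplace (real n) (At z))) + norm (Gam (dirichlet Dt At G (real n) (G z)))) \<longlonglongrightarrow> 0"
    using tendsto_add[OF tendsto_norm_zero[OF Gam_laplace_tendsto] Gam_dirichlet_tendsto] by simp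
qed

end

lemma growth_bound_exponential_bound:
  fixes T :: "real \<Rightarrow> 'a::real_normed_vector \<Rightarrow> 'a"
  assumes "growth_bound T < ereal l0"
  obtains M \<omega> where "1 \<le> M" "0 \<le> \<omega>" "\<And>t x. 0 \<le> t \<Longrightarrow> norm (T t x) \<le> M * exp (\<omega> * t) * norm x"
proof -
  obtain w M0 where wM: "\<And>t x. t \<ge> 0 \<Longrightarrow> norm (T t x) \<le> M0 * exp (w * t) * norm x"
    using assms unfolding growth_bound_def Inf_less_iff by blast
  have "norm (T t x) \<le> max M0 1 * exp (max w 0 * t) * norm x" if t: "0 \<le> t" for t x
  proof -
    have "norm (T t x) \<le> max M0 1 * exp (w * t) * norm x" using wM[OF t] by (smt (verit) mult_right_mono exp_gt_zero norm_ge_zero mult_nonneg_nonneg)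
    also have "\<dots> \<le> max M0 1 * exp (max w 0 * t) * norm x"
      using t by (intro mult_right_mono mult_left_mono) (auto intro: mult_right_mono)
    finally show ?thesis .
  qed
  then show ?thesis using that[of "max M0 1" "max w 0"] by simp
qed

theorem mainTheorem3:
  fixes At :: "'x::banach_lattice \<Rightarrow> 'x" and Dt :: "'x set"
    and G Gam :: "'x \<Rightarrow> 'v::banach_lattice"
    and T :: "real \<Rightarrow> 'x \<Rightarrow> 'x" and p :: real
  defines "DA \<equiv> {x \<in> Dt. G x = 0}"
    and "D \<equiv> dirichlet Dt At G"
    and "R \<equiv> resolvent {x \<in> Dt. G x = 0} At"
  assumes op: "closed_dense_operator Dt At"
    and G_bdd: "graph_bounded Dt At G" and Gam_bdd: "graph_bounded Dt At Gam"
    \<comment> \<open>Assumption 1\<close>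
    and gen: "generates DA At T"
    and T_pos: "\<forall>t\<ge>0. \<forall>x. 0 \<le> x \<longrightarrow> 0 \<le> T t x"
    and G_surj: "G ` Dt = UNIV"
    \<comment> \<open>Assumption 2\<close>
    and p: "1 \<le> p"
    and A2i: "\<exists>l1. \<forall>l\<ge>l1. \<forall>v. 0 \<le> v \<longrightarrow> 0 \<le> D l v"
    and A2ii_pos: "\<forall>x\<in>Dt. 0 \<le> x \<longrightarrow> 0 \<le> Gam x"
    and A2ii_adm: "\<exists>\<alpha>>0. \<exists>\<gamma>>0. \<forall>x\<in>DA. 0 \<le> x \<longrightarrow>
        (\<integral>\<^sup>+ t\<in>{0..\<alpha>}. ennreal (norm (Gam (T t x)) powr p) \<partial>lborel)
          \<le> ennreal (\<gamma> powr p * norm x powr p)"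
    and A2iii: "\<exists>l0. ereal l0 > growth_bound T \<and>
        (\<forall>v. \<exists>C. \<forall>l\<ge>l0. norm (l *\<^sub>R D l v) \<le> C)"
    and A2iv: "\<forall>v u. bounded_linear (u :: 'v \<Rightarrow> real) \<longrightarrow>
        ((\<lambda>l. u (Gam (D l v))) \<longlongrightarrow> 0) at_top"
  shows "(\<forall>v. ((\<lambda>n::nat. norm (Gam (D (real n) v))) \<longlonglongrightarrow> 0)) \<and>
         (\<forall>z\<in>Dt. ((\<lambda>n::nat. norm (Gam (real n *\<^sub>R R (real n) z) - Gam z)) \<longlonglongrightarrow> 0))"
proof -
  obtain M \<omega> where M\<omega>: "1 \<le> M" "0 \<le> \<omega>" "\<And>t x. 0 \<le> t \<Longrightarrow> norm (T t x) \<le> M * exp (\<omega> * t) * norm x"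
    using A2iii growth_bound_exponential_bound by metis
  obtain \<alpha> \<gamma> where \<alpha>: "\<alpha> > 0" and adm: "\<forall>x\<in>DA. 0 \<le> x \<longrightarrow>
      (\<integral>\<^sup>+ t\<in>{0..\<alpha>}. ennreal (norm (Gam (T t x)) powr p) \<partial>lborel) \<le> ennreal (\<gamma> powr p * norm x powr p)"
    using A2ii_adm by blast
  interpret dirichlet_observation At Dt G T M \<omega> Gam \<alpha> \<gamma> p
    using op G_bdd G_surj gen[unfolded DA_def] T_pos M\<omega> Gam_bdd A2ii_pos p \<alpha> adm[unfolded DA_def]
      A2i[unfolded D_def] A2iv[unfolded D_def]
    by unfold_locales auto
  show ?thesis
    unfolding D_def R_def using Gam_dirichlet_tendsto Gam_resolvent_tendsto by blast
qed

end
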